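(* The PIR capacity of the star graph $S_N$ on $N$ vertices satisfies $\mathscr{C}(S_N)=\Theta(N^{-1/2})$ as $N\to\infty$.
   Context: The star graph $S_N$ has $N$ vertices (servers), one (server $N$) of degree $N-1$ and the others of degree $1$; there are $K=N-1$ files, file $W_i$ stored on leaf server $i$ and on server $N$. Graph-based PIR model: files are independent, each uniform on $\mathbb{F}_2^L$; a user wants $W_\theta$, $\theta$ uniform on $[K]$ and independent of the files; it sends queries $Q_1,\dots,Q_N$ (independent of the files); server $i$ answers $A_i$, a deterministic function of $Q_i$ and the files on it. Reliability: $W_\theta$ is determined by all answers and queries. Privacy: $H(\theta\mid Q_i,W_{S_i})=\log K$ for every $i$, $W_{S_i}$ being the files on server $i$. The rate is $L/\sum_i H(A_i)$; the PIR capacity is the supremum of rates over all schemes and file lengths $L$. *)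

theory Defs
  imports "HOL-Probability.Product_PMF" "HOL-Library.Landau_Symbols"
begin

text \<open>Star graph S_N: servers 1..N, files 1..K with K = N-1.
  Leaf server i < N stores file i; the centre N stores all files.\<close>
definition star_store :: "nat \<Rightarrow> nat \<Rightarrow> nat set" where
  "star_store N i = (if i = N then {1..N-1} else {i})"

definition ent :: "'a pmf \<Rightarrow> real" where
  "ent p = (\<Sum>x\<in>set_pmf p. - (pmf p x * log 2 (pmf p x)))"

definition cond_ent :: "'w pmf \<Rightarrow> ('w \<Rightarrow> 'a) \<Rightarrow> ('w \<Rightarrow> 'b) \<Rightarrow> real" where
  "cond_ent P X Y = ent (map_pmf (\<lambda>w. (X w, Y w)) P) - ent (map_pmf Y P)"

text \<open>K independent files, each uniform on F_2^L (bit strings of length L);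
  W j is file j for j in 1..K (value [] elsewhere, irrelevant).\<close>
definition files_pmf :: "nat \<Rightarrow> nat \<Rightarrow> (nat \<Rightarrow> bool list) pmf" where
  "files_pmf K L = Pi_pmf {1..K} [] (\<lambda>_. pmf_of_set {xs. length xs = L})"

text \<open>Joint law of (theta, Q, W): mu is the joint law of the desired index theta and the
  queries Q (Q i = query to server i), drawn independently of the files.\<close>
definition pir_joint :: "(nat \<times> (nat \<Rightarrow> nat)) pmf \<Rightarrow> nat \<Rightarrow> nat
    \<Rightarrow> (nat \<times> (nat \<Rightarrow> nat) \<times> (nat \<Rightarrow> bool list)) pmf" where
  "pir_joint \<mu> K L = bind_pmf \<mu> (\<lambda>(\<theta>, Q). map_pmf (\<lambda>W. (\<theta>, Q, W)) (files_pmf K L))"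

text \<open>ans i q W is the answer of server i to query q; it may only depend on the files stored
  on server i.\<close>
definition is_star_pir_scheme :: "nat \<Rightarrow> nat \<Rightarrow> (nat \<times> (nat \<Rightarrow> nat)) pmf
    \<Rightarrow> (nat \<Rightarrow> nat \<Rightarrow> (nat \<Rightarrow> bool list) \<Rightarrow> nat) \<Rightarrow> bool" where
  "is_star_pir_scheme N L \<mu> ans \<longleftrightarrow>
     (let K = N - 1; P = pir_joint \<mu> K L in
       finite (set_pmf \<mu>)
     \<and> map_pmf fst \<mu> = pmf_of_set {1..K}
     \<and> (\<forall>i\<in>{1..N}. \<forall>q W W'. (\<forall>j\<in>star_store N i. W j = W' j) \<longrightarrow> ans i q W = ans i q W')
     \<and> (\<exists>dec. \<forall>(\<theta>, Q, W)\<in>set_pmf P.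
            dec (\<lambda>i. if i \<in> {1..N} then ans i (Q i) W else 0)
                (\<lambda>i. if i \<in> {1..N} then Q i else 0) = W \<theta>)
     \<and> (\<forall>i\<in>{1..N}. cond_ent P (\<lambda>(\<theta>, Q, W). \<theta>)
            (\<lambda>(\<theta>, Q, W). (Q i, \<lambda>j. if j \<in> star_store N i then W j else [])) = log 2 (real K)))"

definition pir_rate :: "nat \<Rightarrow> nat \<Rightarrow> (nat \<times> (nat \<Rightarrow> nat)) pmf
    \<Rightarrow> (nat \<Rightarrow> nat \<Rightarrow> (nat \<Rightarrow> bool list) \<Rightarrow> nat) \<Rightarrow> real" where
  "pir_rate N L \<mu> ans =
     real L / (\<Sum>i=1..N. ent (map_pmf (\<lambda>(\<theta>, Q, W). ans i (Q i) W) (pir_joint \<mu> (N - 1) L)))"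

definition pir_capacity_star :: "nat \<Rightarrow> real" where
  "pir_capacity_star N =
     Sup {pir_rate N L \<mu> ans | L \<mu> ans. L \<ge> 1 \<and> is_star_pir_scheme N L \<mu> ans}"

end

theory Submission
  imports Defs
begin

text \<open>
  Converse. Fix the desired index \<open>i\<close>, a realisation \<open>q\<close> of the queries and a set \<open>S\<close> of other
  leaves. All answers together determine \<open>W i\<close>, and the leaves in \<open>S\<close> answer from \<open>W S\<close>, so
  \<open>L \<le> H(A_N | W_S) - H(A_N | W_(S \<union> {i})) + \<Sum>j \<notin> S. H(A_j)\<close>.
  Privacy makes every query independent of the index, hence the same inequality holds for the
  entropies averaged over the queries. Adding the leaves one at a time along each of the \<open>K = N - 1\<close>
  cyclic rotations of an ordering and keeping the last \<open>m\<close> steps, the centre terms telescope and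
  \<open>K m L \<le> (K + m (m + 1) / 2) D\<close> with \<open>D\<close> the total download; \<open>m \<approx> \<surd>K\<close> gives a rate
  \<open>O(1 / \<surd>N)\<close>.

  Achievability. A random permutation sorts the leaves into about \<open>\<surd>K\<close> blocks of about \<open>\<surd>K\<close>
  leaves. The centre returns the XOR of the files of every block, the other leaves of the block of
  \<open>\<theta>\<close> return their files, and leaf \<open>\<theta>\<close> returns its own with the probability that a given other
  leaf shares its block. Thus every leaf is asked with a probability independent of \<open>\<theta>\<close>, and
  \<open>W \<theta>\<close> is read off directly or from the XOR of its block. Files of \<open>K\<close> bits cost an expected
  download \<open>O(K \<surd>K)\<close>, a rate \<open>\<Omega>(1 / \<surd>N)\<close>.
\<close>

section \<open>Entropy of finitely supported distributions\<close>

lemma log_ratio_le: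
  fixes p q :: real
  assumes "0 < p" "0 < q"
  shows "(p - q) / ln 2 \<le> p * log 2 p - p * log 2 q"
    and "p \<noteq> q \<Longrightarrow> (p - q) / ln 2 < p * log 2 p - p * log 2 q"
proof -
  have eq: "p * log 2 p - p * log 2 q = - (p * ln (q / p)) / ln 2"
    using assms by (simp add: log_def ln_div field_simps)
  have "ln (q / p) \<le> q / p - 1" using assms by (intro ln_le_minus_one) auto
  hence "p * ln (q / p) \<le> q - p" using assms by (simp add: field_simps mult_left_mono)
  hence "(p - q) / ln 2 \<le> (- (p * ln (q / p))) / ln 2" by (intro divide_right_mono) auto
  thus "(p - q) / ln 2 \<le> p * log 2 p - p * log 2 q" using eq by simp
  assume "p \<noteq> q"
  hence "ln (q / p) \<noteq> q / p - 1" using assms ln_eq_minus_one[of "q / p"] by auto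
  hence "ln (q / p) < q / p - 1" using assms ln_le_minus_one[of "q / p"] by simp
  hence "p * ln (q / p) < q - p" using assms by (simp add: field_simps mult_strict_left_mono)
  hence "(p - q) / ln 2 < (- (p * ln (q / p))) / ln 2" by (intro divide_strict_right_mono) auto
  thus "(p - q) / ln 2 < p * log 2 p - p * log 2 q" using eq by simp
qed

lemma gibbs_inequality:
  fixes p q :: "'a \<Rightarrow> real"
  assumes "finite A" "\<And>a. a \<in> A \<Longrightarrow> 0 < p a" "\<And>a. a \<in> A \<Longrightarrow> 0 < q a"
    and "sum p A = 1" "sum q A \<le> 1"
  shows "(\<Sum>a\<in>A. p a * - log 2 (p a)) \<le> (\<Sum>a\<in>A. p a * - log 2 (q a))"
    and "(\<Sum>a\<in>A. p a * - log 2 (p a)) = (\<Sum>a\<in>A. p a * - log 2 (q a)) \<Longrightarrow> \<forall>a\<in>A. p a = q a"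
proof -
  have "0 \<le> (\<Sum>a\<in>A. (p a - q a) / ln 2)"
    using assms by (simp add: sum_subtractf sum_divide_distrib[symmetric])
  also have "\<dots> \<le> (\<Sum>a\<in>A. p a * log 2 (p a) - p a * log 2 (q a))"
    using assms by (intro sum_mono log_ratio_le) auto
  finally show "(\<Sum>a\<in>A. p a * - log 2 (p a)) \<le> (\<Sum>a\<in>A. p a * - log 2 (q a))"
    by (simp add: sum_subtractf sum_negf)
  assume eq: "(\<Sum>a\<in>A. p a * - log 2 (p a)) = (\<Sum>a\<in>A. p a * - log 2 (q a))"
  show "\<forall>a\<in>A. p a = q a"
  proof (rule ccontr)
    assume "\<not> (\<forall>a\<in>A. p a = q a)"
    then obtain b where "b \<in> A" "p b \<noteq> q b" by auto
    hence "(\<Sum>a\<in>A. (p a - q a) / ln 2) < (\<Sum>a\<in>A. p a * log 2 (p a) - p a * log 2 (q a))"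
      using assms by (intro sum_strict_mono_ex1) (auto intro: log_ratio_le)
    with \<open>0 \<le> (\<Sum>a\<in>A. (p a - q a) / ln 2)\<close> eq show False
      by (simp add: sum_subtractf sum_negf)
  qed
qed

lemma ent_alt: "ent p = (\<Sum>x\<in>set_pmf p. pmf p x * - log 2 (pmf p x))"
  unfolding ent_def by simp

lemma ent_nonneg: "0 \<le> ent p"
  unfolding ent_alt by (intro sum_nonneg mult_nonneg_nonneg) (auto simp: pmf_le_1 pmf_positive)

lemma ent_return_pmf [simp]: "ent (return_pmf c) = 0"
  unfolding ent_def by simp

lemma sum_pmf_le_1: "finite A \<Longrightarrow> sum (pmf p) A \<le> 1"
  by (metis measure_measure_pmf_finite measure_pmf.prob_le_1)

lemma pmf_eq_if_eq_on_set_pmf: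
  assumes fin: "finite (set_pmf p)" and eq: "\<And>x. x \<in> set_pmf p \<Longrightarrow> pmf p x = pmf q x"
  shows "p = q"
proof (rule pmf_eqI)
  fix y
  show "pmf p y = pmf q y"
  proof (cases "y \<in> set_pmf p")
    case False
    have "sum (pmf q) (set_pmf p) = sum (pmf p) (set_pmf p)" using eq by (intro sum.cong) auto
    hence "sum (pmf q) (set_pmf p) = 1" using fin by (simp add: sum_pmf_eq_1)
    moreover have "sum (pmf q) (insert y (set_pmf p)) \<le> 1" using fin by (intro sum_pmf_le_1) auto
    ultimately have "pmf q y = 0" using fin False pmf_nonneg[of q y] by simp
    thus ?thesis using False by (simp add: set_pmf_eq)
  qed (use eq in auto)
qed

lemma pmf_map_eq_sum:
  assumes "finite (set_pmf p)"
  shows "pmf (map_pmf f p) y = (\<Sum>x\<in>{x\<in>set_pmf p. f x = y}. pmf p x)"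
proof -
  have "pmf (map_pmf f p) y = measure_pmf.prob p (f -` {y} \<inter> set_pmf p)"
    by (simp add: pmf_map measure_Int_set_pmf)
  also have "f -` {y} \<inter> set_pmf p = {x\<in>set_pmf p. f x = y}" by auto
  finally show ?thesis using assms by (simp add: measure_measure_pmf_finite)
qed

lemma sum_set_pmf_map_pmf:
  assumes "finite (set_pmf p)"
  shows "(\<Sum>y\<in>set_pmf (map_pmf f p). pmf (map_pmf f p) y * G y) = (\<Sum>x\<in>set_pmf p. pmf p x * G (f x))"
proof -
  have "(\<Sum>y\<in>set_pmf (map_pmf f p). pmf (map_pmf f p) y * G y) = measure_pmf.expectation (map_pmf f p) G"
    using assms by (subst integral_measure_pmf_real[where A = "set_pmf (map_pmf f p)"]) (auto simp: mult.commute)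
  also have "\<dots> = measure_pmf.expectation p (\<lambda>x. G (f x))" by simp
  also have "\<dots> = (\<Sum>x\<in>set_pmf p. pmf p x * G (f x))"
    using assms by (subst integral_measure_pmf_real[where A = "set_pmf p"]) (auto simp: mult.commute)
  finally show ?thesis .
qed

lemma ent_map_pmf:
  assumes "finite (set_pmf p)"
  shows "ent (map_pmf f p) = (\<Sum>x\<in>set_pmf p. pmf p x * - log 2 (pmf (map_pmf f p) (f x)))"
  unfolding ent_alt by (rule sum_set_pmf_map_pmf[OF assms])

lemma ent_map_pmf_factor_le:
  assumes fin: "finite (set_pmf p)" and factor: "\<And>x. x \<in> set_pmf p \<Longrightarrow> f x = h (g x)"
  shows "ent (map_pmf f p) \<le> ent (map_pmf g p)"
  unfolding ent_map_pmf[OF fin]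
proof (intro sum_mono mult_left_mono)
  fix x assume x: "x \<in> set_pmf p"
  have fibre: "{x'\<in>set_pmf p. g x' = g x} \<subseteq> {x'\<in>set_pmf p. f x' = f x}" using factor x by auto
  have "pmf (map_pmf g p) (g x) \<le> pmf (map_pmf f p) (f x)"
    unfolding pmf_map_eq_sum[OF fin] by (rule sum_mono2) (use fin fibre in auto)
  moreover have "0 < pmf (map_pmf g p) (g x)" using x by (simp add: pmf_positive)
  ultimately show "- log 2 (pmf (map_pmf f p) (f x)) \<le> - log 2 (pmf (map_pmf g p) (g x))" by simp
qed simp

lemma ent_map_pmf_eqI:
  assumes "finite (set_pmf p)"
    and "\<And>x. x \<in> set_pmf p \<Longrightarrow> f x = h (g x)" "\<And>x. x \<in> set_pmf p \<Longrightarrow> g x = h' (f x)"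
  shows "ent (map_pmf f p) = ent (map_pmf g p)"
  using ent_map_pmf_factor_le[of p f h g, OF assms(1,2)] ent_map_pmf_factor_le[of p g h' f, OF assms(1,3)]
  by (rule antisym)

lemma ent_le_cross_entropy:
  assumes fin: "finite (set_pmf p)" and "\<And>x. x \<in> set_pmf p \<Longrightarrow> 0 < q x"
    and "(\<Sum>x\<in>set_pmf p. q x) \<le> 1"
  shows "ent p \<le> (\<Sum>x\<in>set_pmf p. pmf p x * - log 2 (q x))"
  unfolding ent_alt
  by (rule gibbs_inequality(1)[OF fin]) (use assms in \<open>auto simp: pmf_positive sum_pmf_eq_1\<close>)

lemma ent_le_log_card:
  assumes "finite A" "set_pmf p \<subseteq> A"
  shows "ent p \<le> log 2 (card A)"
proof -
  have fin: "finite (set_pmf p)" using assms finite_subset by auto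
  have A: "card A > 0" using assms set_pmf_not_empty[of p] by (metis card_gt_0_iff subset_empty)
  have "ent p \<le> (\<Sum>x\<in>set_pmf p. pmf p x * - log 2 (1 / card A))"
  proof (rule ent_le_cross_entropy[OF fin])
    have "(\<Sum>x\<in>set_pmf p. 1 / real (card A)) = card (set_pmf p) / card A" by simp
    also have "\<dots> \<le> 1" using A card_mono[OF assms] by simp
    finally show "(\<Sum>x\<in>set_pmf p. 1 / real (card A)) \<le> 1" .
  qed (use A in auto)
  also have "\<dots> = log 2 (card A)"
    using fin A by (simp add: sum_distrib_right[symmetric] sum_pmf_eq_1 log_divide)
  finally show ?thesis .
qed

lemma ent_pmf_of_set:
  assumes "finite A" "A \<noteq> {}"
  shows "ent (pmf_of_set A) = log 2 (card A)"
proof -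
  have "ent (pmf_of_set A) = (\<Sum>x\<in>A. 1 / card A * - log 2 (1 / card A))"
    unfolding ent_alt using assms by (intro sum.cong) auto
  also have "\<dots> = log 2 (card A)" using assms by (simp add: log_divide)
  finally show ?thesis .
qed

lemma ent_fst_plus_ent_snd:
  fixes T :: "('a \<times> 'b) pmf"
  assumes fin: "finite (set_pmf T)"
  defines "Q \<equiv> pair_pmf (map_pmf fst T) (map_pmf snd T)"
  shows "ent (map_pmf fst T) + ent (map_pmf snd T) = (\<Sum>t\<in>set_pmf T. pmf T t * - log 2 (pmf Q t))"
proof -
  have "ent (map_pmf fst T) + ent (map_pmf snd T) = (\<Sum>t\<in>set_pmf T.
          pmf T t * - log 2 (pmf (map_pmf fst T) (fst t)) + pmf T t * - log 2 (pmf (map_pmf snd T) (snd t)))"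
    by (simp only: ent_map_pmf[OF fin] sum.distrib)
  also have "\<dots> = (\<Sum>t\<in>set_pmf T. pmf T t * - log 2 (pmf Q t))"
  proof (intro sum.cong refl)
    fix t assume t: "t \<in> set_pmf T"
    have "0 < pmf (map_pmf fst T) (fst t)" "0 < pmf (map_pmf snd T) (snd t)"
      using t by (auto simp: pmf_positive)
    thus "pmf T t * - log 2 (pmf (map_pmf fst T) (fst t)) + pmf T t * - log 2 (pmf (map_pmf snd T) (snd t))
        = pmf T t * - log 2 (pmf Q t)"
      unfolding Q_def by (cases t) (simp add: pmf_pair log_mult algebra_simps)
  qed
  finally show ?thesis .
qed

lemma ent_pair_pmf:
  assumes "finite (set_pmf A)" "finite (set_pmf B)"
  shows "ent (pair_pmf A B) = ent A + ent B"
  using ent_fst_plus_ent_snd[of "pair_pmf A B"] assms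
  by (simp add: map_fst_pair_pmf map_snd_pair_pmf ent_alt)

lemma ent_le_ent_fst_plus_ent_snd:
  fixes T :: "('a \<times> 'b) pmf"
  assumes fin: "finite (set_pmf T)"
  shows "ent T \<le> ent (map_pmf fst T) + ent (map_pmf snd T)"
    and "ent T = ent (map_pmf fst T) + ent (map_pmf snd T) \<Longrightarrow> T = pair_pmf (map_pmf fst T) (map_pmf snd T)"
proof -
  let ?Q = "pair_pmf (map_pmf fst T) (map_pmf snd T)"
  have pos: "0 < pmf ?Q t" if "t \<in> set_pmf T" for t
    using that by (cases t) (force simp: pmf_positive_iff set_pair_pmf)
  have sum: "sum (pmf ?Q) (set_pmf T) \<le> 1" using fin by (rule sum_pmf_le_1)
  note gibbs = gibbs_inequality[OF fin, of "pmf T" "pmf ?Q"]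
  show "ent T \<le> ent (map_pmf fst T) + ent (map_pmf snd T)"
    unfolding ent_fst_plus_ent_snd[OF fin] unfolding ent_alt
    by (rule gibbs(1)) (use fin pos sum in \<open>auto simp: pmf_positive sum_pmf_eq_1\<close>)
  assume "ent T = ent (map_pmf fst T) + ent (map_pmf snd T)"
  hence "\<forall>t\<in>set_pmf T. pmf T t = pmf ?Q t"
    unfolding ent_fst_plus_ent_snd[OF fin] unfolding ent_alt
    by (intro gibbs(2)) (use fin pos sum in \<open>auto simp: pmf_positive sum_pmf_eq_1\<close>)
  thus "T = ?Q" using pmf_eq_if_eq_on_set_pmf[OF fin] by blast
qed

lemma ent_map_pmf_pair_le:
  assumes "finite (set_pmf p)"
  shows "ent (map_pmf (\<lambda>x. (f x, g x)) p) \<le> ent (map_pmf f p) + ent (map_pmf g p)"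
  using ent_le_ent_fst_plus_ent_snd(1)[of "map_pmf (\<lambda>x. (f x, g x)) p"] assms
  by (simp add: pmf.map_comp o_def)

lemma ent_map_pmf_fun_le_sum:
  assumes fin: "finite (set_pmf p)" and "finite R"
  shows "ent (map_pmf (\<lambda>x j. if j \<in> R then f j x else (0::'b::zero)) p) \<le> (\<Sum>j\<in>R. ent (map_pmf (f j) p))"
  using \<open>finite R\<close>
proof (induction R rule: finite_induct)
  case (insert a R)
  have "ent (map_pmf (\<lambda>x j. if j \<in> insert a R then f j x else 0) p)
      \<le> ent (map_pmf (\<lambda>x. (f a x, (\<lambda>j. if j \<in> R then f j x else 0))) p)"
    by (rule ent_map_pmf_factor_le[OF fin, where h = "\<lambda>(z, v). v(a := z)"]) (auto simp: fun_eq_iff)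
  also have "\<dots> \<le> ent (map_pmf (f a) p) + ent (map_pmf (\<lambda>x j. if j \<in> R then f j x else 0) p)"
    by (rule ent_map_pmf_pair_le[OF fin])
  finally show ?case using insert by simp
qed simp

lemma pmf_bind_pmf_finite:
  assumes "finite (set_pmf M)"
  shows "pmf (bind_pmf M k) v = (\<Sum>x\<in>set_pmf M. pmf M x * pmf (k x) v)"
  unfolding pmf_bind by (subst integral_measure_pmf_real[OF assms]) (auto simp: mult.commute)

lemma ent_bind_pmf_ge:
  assumes finM: "finite (set_pmf M)" and fink: "\<And>x. x \<in> set_pmf M \<Longrightarrow> finite (set_pmf (k x))"
  shows "(\<Sum>x\<in>set_pmf M. pmf M x * ent (k x)) \<le> ent (bind_pmf M k)"
proof -
  let ?r = "bind_pmf M k"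
  have set_r: "set_pmf ?r = (\<Union>x\<in>set_pmf M. set_pmf (k x))" by (simp add: set_bind_pmf)
  have fin_r: "finite (set_pmf ?r)" using finM fink set_r by auto
  have cross: "ent (k x) \<le> (\<Sum>v\<in>set_pmf (k x). pmf (k x) v * - log 2 (pmf ?r v))" if x: "x \<in> set_pmf M" for x
    by (rule ent_le_cross_entropy[OF fink[OF x]]) (use x set_r fink[OF x] in \<open>auto simp: pmf_positive_iff sum_pmf_le_1\<close>)
  have restrict: "(\<Sum>v\<in>set_pmf ?r. pmf (k x) v * - log 2 (pmf ?r v))
      = (\<Sum>v\<in>set_pmf (k x). pmf (k x) v * - log 2 (pmf ?r v))" if x: "x \<in> set_pmf M" for x
    by (rule sum.mono_neutral_right) (use fin_r x set_r in \<open>auto simp: set_pmf_eq\<close>)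
  have "(\<Sum>x\<in>set_pmf M. pmf M x * ent (k x))
      \<le> (\<Sum>x\<in>set_pmf M. pmf M x * (\<Sum>v\<in>set_pmf ?r. pmf (k x) v * - log 2 (pmf ?r v)))"
    using cross restrict by (intro sum_mono mult_left_mono) auto
  also have "\<dots> = (\<Sum>x\<in>set_pmf M. \<Sum>v\<in>set_pmf ?r. pmf M x * pmf (k x) v * - log 2 (pmf ?r v))"
    by (simp only: sum_distrib_left mult.assoc)
  also have "\<dots> = (\<Sum>v\<in>set_pmf ?r. (\<Sum>x\<in>set_pmf M. pmf M x * pmf (k x) v) * - log 2 (pmf ?r v))"
    by (subst sum.swap) (simp only: sum_distrib_right)
  also have "\<dots> = ent ?r"
    unfolding ent_alt using finM by (simp add: pmf_bind_pmf_finite)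
  finally show ?thesis .
qed

lemma cond_ent_eq_ent_iff_indep:
  assumes "finite (set_pmf P)"
  shows "cond_ent P X Y = ent (map_pmf X P)
     \<longleftrightarrow> map_pmf (\<lambda>w. (X w, Y w)) P = pair_pmf (map_pmf X P) (map_pmf Y P)"
proof -
  let ?T = "map_pmf (\<lambda>w. (X w, Y w)) P"
  have fst: "map_pmf fst ?T = map_pmf X P" and snd: "map_pmf snd ?T = map_pmf Y P"
    by (simp_all add: pmf.map_comp o_def)
  have "cond_ent P X Y = ent (map_pmf X P) \<longleftrightarrow> ent ?T = ent (map_pmf fst ?T) + ent (map_pmf snd ?T)"
    unfolding cond_ent_def fst snd by auto
  also have "\<dots> \<longleftrightarrow> ?T = pair_pmf (map_pmf fst ?T) (map_pmf snd ?T)"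
    using ent_le_ent_fst_plus_ent_snd(2)[of ?T] ent_pair_pmf[of "map_pmf fst ?T" "map_pmf snd ?T"] assms
    by auto
  finally show ?thesis unfolding fst snd .
qed

lemma ent_le_log_card_image:
  assumes "finite A" "set_pmf p \<subseteq> f ` A"
  shows "ent p \<le> log 2 (card A)"
proof -
  have "ent p \<le> log 2 (card (f ` A))" using assms by (intro ent_le_log_card) auto
  also have "\<dots> \<le> log 2 (card A)"
  proof -
    have "0 < card (f ` A)" using assms set_pmf_not_empty[of p] by (metis card_gt_0_iff finite_imageI subset_empty)
    thus ?thesis using card_image_le[OF assms(1), of f] by simp
  qed
  finally show ?thesis .
qed

text \<open>Cross entropy against \<open>q 0 = 1/2\<close> and \<open>q y = 2 ^ - (L + 1)\<close> on the at most \<open>2 ^ L\<close> other values.\<close>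

lemma ent_le_one_plus_prob_nonzero:
  fixes p :: "'a::zero pmf"
  assumes Y: "finite Y" "card Y \<le> 2 ^ L" and p: "set_pmf p \<subseteq> insert 0 Y"
  shows "ent p \<le> 1 + real L * (1 - pmf p 0)"
proof -
  define q :: "'a \<Rightarrow> real" where "q x = (if x = 0 then 1 / 2 else 1 / 2 ^ (L + 1))" for x
  have fin: "finite (set_pmf p)" using Y p finite_subset by blast
  have "(\<Sum>x\<in>set_pmf p. q x) \<le> (\<Sum>x\<in>insert 0 (Y - {0}). q x)"
    using Y p by (intro sum_mono2) (auto simp: q_def)
  also have "\<dots> = q 0 + (\<Sum>x\<in>Y - {0}. q x)" by (rule sum.insert) (use Y in auto)
  also have "(\<Sum>x\<in>Y - {0}. q x) = (\<Sum>x\<in>Y - {0}. 1 / 2 ^ (L + 1))" by (rule sum.cong) (auto simp: q_def)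
  also have "q 0 + \<dots> = 1 / 2 + card (Y - {0}) / 2 ^ (L + 1)" by (simp add: q_def)
  also have "\<dots> \<le> 1 / 2 + 2 ^ L / 2 ^ (L + 1)"
    using card_mono[OF Y(1), of "Y - {0}"] Y(2) by (intro add_left_mono divide_right_mono) auto
  finally have q_sum: "(\<Sum>x\<in>set_pmf p. q x) \<le> 1" by simp
  have log_q: "- log 2 (q x) = 1 + real L * (if x = 0 then 0 else 1)" for x
    by (simp add: q_def log_divide log_mult log_nat_power)
  have "ent p \<le> (\<Sum>x\<in>set_pmf p. pmf p x * - log 2 (q x))"
    by (rule ent_le_cross_entropy[OF fin _ q_sum]) (simp add: q_def)
  also have "\<dots> = (\<Sum>x\<in>set_pmf p. pmf p x + real L * (if x = 0 then 0 else pmf p x))"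
    by (intro sum.cong refl) (simp add: log_q algebra_simps)
  also have "\<dots> = 1 + real L * (\<Sum>x\<in>set_pmf p. if x = 0 then 0 else pmf p x)"
    using fin by (simp only: sum.distrib sum_distrib_left[symmetric] sum_pmf_eq_1 order_refl)
  also have "(\<Sum>x\<in>set_pmf p. if x = 0 then 0 else pmf p x) = 1 - pmf p 0"
  proof -
    have "(\<Sum>x\<in>set_pmf p. if x = 0 then 0 else pmf p x) = (\<Sum>x\<in>set_pmf p. pmf p x) - (\<Sum>x\<in>set_pmf p. if x = 0 then pmf p x else 0)"
      by (simp only: sum_subtractf[symmetric]) (intro sum.cong refl, simp)
    also have "\<dots> = 1 - pmf p 0"
      using fin by (simp add: sum_pmf_eq_1 sum.delta set_pmf_eq)
    finally show ?thesis .
  qed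
  finally show ?thesis .
qed

section \<open>Uniformly random files\<close>

definition restrict_files :: "nat set \<Rightarrow> (nat \<Rightarrow> bool list) \<Rightarrow> nat \<Rightarrow> bool list" where
  "restrict_files S W = (\<lambda>j. if j \<in> S then W j else [])"

lemma restrict_files_insert: "restrict_files (insert i S) W = (restrict_files S W)(i := W i)"
  by (auto simp: restrict_files_def)

lemma finite_bit_strings: "finite {xs :: bool list. length xs = L}"
  using finite_lists_length_eq[of "UNIV :: bool set" L] by simp

lemma card_bit_strings: "card {xs :: bool list. length xs = L} = 2 ^ L"
  using card_lists_length_eq[of "UNIV :: bool set" L] by simp

lemma ex_bit_string: "\<exists>xs :: bool list. length xs = L"
  by (rule exI[of _ "replicate L False"]) simp

lemma Pi_pmf_bit_strings:
  assumes "finite T"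
  shows "Pi_pmf T [] (\<lambda>_. pmf_of_set {xs :: bool list. length xs = L})
       = pmf_of_set (PiE_dflt T [] (\<lambda>_. {xs. length xs = L}))"
  using assms by (intro Pi_pmf_of_set) (auto simp: finite_bit_strings ex_bit_string)

lemma set_pmf_files_pmf: "set_pmf (files_pmf K L) = PiE_dflt {1..K} [] (\<lambda>_. {xs. length xs = L})"
  unfolding files_pmf_def Pi_pmf_bit_strings[OF finite_atLeastAtMost]
  by (intro set_pmf_of_set) (auto simp: finite_bit_strings ex_bit_string)

lemma finite_set_pmf_files_pmf [simp]: "finite (set_pmf (files_pmf K L))"
  unfolding set_pmf_files_pmf by (rule finite_PiE_dflt) (auto simp: finite_bit_strings)

lemma length_file: "W \<in> set_pmf (files_pmf K L) \<Longrightarrow> j \<in> {1..K} \<Longrightarrow> length (W j) = L"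
  unfolding set_pmf_files_pmf PiE_dflt_def by auto

lemma ent_restrict_files:
  assumes "T \<subseteq> {1..K}"
  shows "ent (map_pmf (restrict_files T) (files_pmf K L)) = real L * real (card T)"
proof -
  have T: "finite T" using assms finite_subset by blast
  have "map_pmf (restrict_files T) (files_pmf K L) = pmf_of_set (PiE_dflt T [] (\<lambda>_. {xs. length xs = L}))"
    unfolding files_pmf_def restrict_files_def Pi_pmf_bit_strings[OF T, symmetric]
    by (rule Pi_pmf_subset[symmetric]) (use assms in auto)
  moreover have "card (PiE_dflt T [] (\<lambda>_. {xs :: bool list. length xs = L})) = 2 ^ (L * card T)"
    using T by (simp add: card_PiE_dflt finite_bit_strings card_bit_strings power_mult)
  moreover have "finite (PiE_dflt T [] (\<lambda>_. {xs :: bool list. length xs = L}))"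
    using T by (intro finite_PiE_dflt) (auto simp: finite_bit_strings)
  ultimately show ?thesis
    by (simp add: ent_pmf_of_set ex_bit_string log_nat_power)
qed

section \<open>The joint law of index, queries and files\<close>

lemma set_pmf_pir_joint:
  "set_pmf (pir_joint \<mu> K L) = {(\<theta>, Q, W). (\<theta>, Q) \<in> set_pmf \<mu> \<and> W \<in> set_pmf (files_pmf K L)}"
  unfolding pir_joint_def by (auto simp: set_bind_pmf)

lemma finite_set_pmf_pir_joint: "finite (set_pmf \<mu>) \<Longrightarrow> finite (set_pmf (pir_joint \<mu> K L))"
  unfolding pir_joint_def by (auto simp: set_bind_pmf intro!: finite_UN_I)

lemma map_pmf_pir_joint:
  "map_pmf g (pir_joint \<mu> K L) = bind_pmf \<mu> (\<lambda>x. map_pmf (\<lambda>W. g (fst x, snd x, W)) (files_pmf K L))"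
  unfolding pir_joint_def map_bind_pmf
  by (intro bind_pmf_cong refl) (auto simp: pmf.map_comp o_def split: prod.splits)

lemma map_pmf_pir_joint_queries:
  "map_pmf (\<lambda>w. h (fst w) (fst (snd w))) (pir_joint \<mu> K L) = map_pmf (\<lambda>x. h (fst x) (snd x)) \<mu>"
  unfolding map_pmf_pir_joint by (simp add: map_pmf_const map_pmf_def)

lemma pir_joint_query_indep:
  assumes "map_pmf (\<lambda>x. (fst x, snd x j)) \<mu> = pair_pmf A \<nu>"
  shows "map_pmf (\<lambda>(\<theta>, Q, W). (\<theta>, Q j, h W)) (pir_joint \<mu> K L)
       = pair_pmf A (bind_pmf \<nu> (\<lambda>b. map_pmf (\<lambda>W. (b, h W)) (files_pmf K L)))"
proof -
  let ?F = "files_pmf K L"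
  have "map_pmf (\<lambda>(\<theta>, Q, W). (\<theta>, Q j, h W)) (pir_joint \<mu> K L)
      = bind_pmf (map_pmf (\<lambda>x. (fst x, snd x j)) \<mu>) (\<lambda>y. map_pmf (\<lambda>W. (fst y, snd y, h W)) ?F)"
    by (simp add: map_pmf_pir_joint bind_map_pmf)
  also have "\<dots> = bind_pmf A (\<lambda>a. map_pmf (Pair a) (bind_pmf \<nu> (\<lambda>b. map_pmf (\<lambda>W. (b, h W)) ?F)))"
    unfolding assms pair_pmf_def
    by (simp add: bind_assoc_pmf bind_return_pmf map_bind_pmf pmf.map_comp o_def map_pmf_def)
  also have "\<dots> = pair_pmf A (bind_pmf \<nu> (\<lambda>b. map_pmf (\<lambda>W. (b, h W)) ?F))"
    by (simp add: pair_pmf_def map_pmf_def)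
  finally show ?thesis .
qed

text \<open>The files are independent of the index and of the queries, so a server can learn about the
  index only through its query.\<close>

lemma privacy_iff_query_indep:
  assumes fin: "finite (set_pmf \<mu>)" and index: "map_pmf fst \<mu> = pmf_of_set {1..K}" and "K \<ge> 1"
  shows "cond_ent (pir_joint \<mu> K L) (\<lambda>(\<theta>, Q, W). \<theta>) (\<lambda>(\<theta>, Q, W). (Q j, h W)) = log 2 (real K)
     \<longleftrightarrow> map_pmf (\<lambda>x. (fst x, snd x j)) \<mu> = pair_pmf (pmf_of_set {1..K}) (map_pmf (\<lambda>x. snd x j) \<mu>)"
    (is "cond_ent ?P ?X ?Y = _ \<longleftrightarrow> ?indep")
proof -
  let ?T = "map_pmf (\<lambda>w. (?X w, ?Y w)) ?P"
  have X: "map_pmf ?X ?P = pmf_of_set {1..K}"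
    using map_pmf_pir_joint_queries[of "\<lambda>a b. a" \<mu> K L] index by (simp add: case_prod_beta')
  have Y_fst: "map_pmf (\<lambda>w. fst (?Y w)) ?P = map_pmf (\<lambda>x. snd x j) \<mu>"
    using map_pmf_pir_joint_queries[of "\<lambda>a b. b j" \<mu> K L] by (simp add: case_prod_beta)
  have "cond_ent ?P ?X ?Y = log 2 (real K) \<longleftrightarrow> cond_ent ?P ?X ?Y = ent (map_pmf ?X ?P)"
    using X \<open>K \<ge> 1\<close> by (simp add: ent_pmf_of_set)
  also have "\<dots> \<longleftrightarrow> ?T = pair_pmf (map_pmf ?X ?P) (map_pmf ?Y ?P)"
    by (rule cond_ent_eq_ent_iff_indep[OF finite_set_pmf_pir_joint[OF fin]])
  also have "\<dots> \<longleftrightarrow> ?indep"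
  proof
    assume T: "?T = pair_pmf (map_pmf ?X ?P) (map_pmf ?Y ?P)"
    have "map_pmf (\<lambda>x. (fst x, snd x j)) \<mu> = map_pmf (\<lambda>(a, b). (a, fst b)) ?T"
      using map_pmf_pir_joint_queries[of "\<lambda>a b. (a, b j)" \<mu> K L]
      by (simp add: pmf.map_comp o_def case_prod_beta)
    also have "\<dots> = pair_pmf (map_pmf (\<lambda>a. a) (map_pmf ?X ?P)) (map_pmf fst (map_pmf ?Y ?P))"
      unfolding T by (rule map_pair)
    finally show ?indep using X Y_fst by (simp add: pmf.map_comp o_def)
  next
    assume ?indep
    from pir_joint_query_indep[OF this, of h K L]
    have "?T = pair_pmf (pmf_of_set {1..K}) (map_pmf snd ?T)"
      by (simp add: case_prod_beta' map_snd_pair_pmf)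
    thus "?T = pair_pmf (map_pmf ?X ?P) (map_pmf ?Y ?P)" using X by (simp add: pmf.map_comp o_def)
  qed
  finally show ?thesis .
qed

lemma is_star_pir_schemeD:
  assumes "is_star_pir_scheme N L \<mu> ans"
  shows "finite (set_pmf \<mu>)"
    and "map_pmf fst \<mu> = pmf_of_set {1..N-1}"
    and "i \<in> {1..N} \<Longrightarrow> \<forall>j\<in>star_store N i. W j = W' j \<Longrightarrow> ans i q W = ans i q W'"
    and "\<exists>dec. \<forall>(\<theta>, Q, W)\<in>set_pmf (pir_joint \<mu> (N-1) L).
           dec (\<lambda>i. if i \<in> {1..N} then ans i (Q i) W else 0) (\<lambda>i. if i \<in> {1..N} then Q i else 0) = W \<theta>"
    and "i \<in> {1..N} \<Longrightarrow> cond_ent (pir_joint \<mu> (N-1) L) (\<lambda>(\<theta>, Q, W). \<theta>)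
           (\<lambda>(\<theta>, Q, W). (Q i, restrict_files (star_store N i) W)) = log 2 (real (N-1))"
proof -
  note s = assms[unfolded is_star_pir_scheme_def Let_def, THEN conjunct2, THEN conjunct2]
  show "finite (set_pmf \<mu>)" "map_pmf fst \<mu> = pmf_of_set {1..N-1}"
    using assms unfolding is_star_pir_scheme_def Let_def by simp_all
  show "i \<in> {1..N} \<Longrightarrow> \<forall>j\<in>star_store N i. W j = W' j \<Longrightarrow> ans i q W = ans i q W'"
    using s[THEN conjunct1] by blast
  show "\<exists>dec. \<forall>(\<theta>, Q, W)\<in>set_pmf (pir_joint \<mu> (N-1) L).
           dec (\<lambda>i. if i \<in> {1..N} then ans i (Q i) W else 0) (\<lambda>i. if i \<in> {1..N} then Q i else 0) = W \<theta>"
    using s[THEN conjunct2, THEN conjunct1] .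
  show "i \<in> {1..N} \<Longrightarrow> cond_ent (pir_joint \<mu> (N-1) L) (\<lambda>(\<theta>, Q, W). \<theta>)
           (\<lambda>(\<theta>, Q, W). (Q i, restrict_files (star_store N i) W)) = log 2 (real (N-1))"
    using s[THEN conjunct2, THEN conjunct2] unfolding restrict_files_def by blast
qed

lemma star_pir_query_indep:
  assumes "is_star_pir_scheme N L \<mu> ans" "N \<ge> 2" "j \<in> {1..N}"
  shows "map_pmf (\<lambda>x. (fst x, snd x j)) \<mu> = pair_pmf (pmf_of_set {1..N-1}) (map_pmf (\<lambda>x. snd x j) \<mu>)"
proof -
  have "N - 1 \<ge> 1" using assms(2) by simp
  from privacy_iff_query_indep[OF is_star_pir_schemeD(1,2)[OF assms(1)] this]
  show ?thesis using is_star_pir_schemeD(5)[OF assms(1,3)] by blast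
qed

section \<open>Telescoping along cyclic orderings\<close>

lemma bij_betw_add_mod:
  fixes K r :: nat
  assumes "0 < K"
  shows "bij_betw (\<lambda>t. (r + t) mod K) {..<K} {..<K}"
proof -
  have eq: "x = y" if "x \<le> y" "y < K" "(r + x) mod K = (r + y) mod K" for x y
  proof -
    have "K dvd y - x" using mod_eq_dvd_iff_nat[of "r + x" "r + y" K] that by simp
    thus ?thesis using that by (metis diff_is_0_eq dvd_imp_le less_imp_diff_less nat_neq_iff not_less0 zero_less_diff)
  qed
  have inj: "inj_on (\<lambda>t. (r + t) mod K) {..<K}"
    by (rule inj_onI) (metis eq lessThan_iff nat_le_linear)
  moreover have "(\<lambda>t. (r + t) mod K) ` {..<K} = {..<K}"
    using assms inj by (intro endo_inj_surj) auto
  ultimately show ?thesis by (simp add: bij_betw_def)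
qed

lemma sum_diff_atLeastLessThan:
  "m \<le> K \<Longrightarrow> (\<Sum>p\<in>{K-m..<K}. real (K - p)) = real m * (real m + 1) / 2"
proof (induction m)
  case (Suc m)
  have "{K - Suc m..<K} = insert (K - Suc m) {K-m..<K}" using Suc.prems by auto
  thus ?case using Suc by (simp add: field_simps)
qed simp

text \<open>Peeling the leaves off one at a time in the order \<open>\<sigma>\<close> and keeping the last \<open>m\<close> steps
  makes the \<open>H\<close>-terms telescope.\<close>

lemma telescoping_along_ordering:
  fixes H :: "nat set \<Rightarrow> real" and d :: "nat \<Rightarrow> real"
  assumes step: "\<And>i S. S \<subseteq> {1..K} \<Longrightarrow> i \<in> {1..K} - S \<Longrightarrow> c \<le> H S - H (insert i S) + sum d ({1..K} - S)"
    and full: "H {1..K} = 0" and bound: "\<And>S. S \<subseteq> {1..K} \<Longrightarrow> H S \<le> a"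
    and "m \<le> K" and \<sigma>: "bij_betw \<sigma> {..<K} {1..K}"
  shows "real m * c \<le> a + (\<Sum>p\<in>{K-m..<K}. \<Sum>t\<in>{p..<K}. d (\<sigma> t))"
proof -
  have inj: "inj_on \<sigma> {..<K}" and img: "\<sigma> ` {..<K} = {1..K}" using \<sigma> by (auto simp: bij_betw_def)
  have prefix: "\<sigma> ` {..<p} \<subseteq> {1..K}" if "p \<le> K" for p
    using that img by auto
  have peel: "c \<le> H (\<sigma> ` {..<p}) - H (\<sigma> ` {..<Suc p}) + (\<Sum>t\<in>{p..<K}. d (\<sigma> t))" if "p < K" for p
  proof -
    have sub: "{..<p} \<subseteq> {..<K}" using that by auto
    have rest: "{1..K} - \<sigma> ` {..<p} = \<sigma> ` {p..<K}"
    proof -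
      have "{..<K} - {..<p} = {p..<K}" by auto
      thus ?thesis using inj_on_image_set_diff[OF inj Diff_subset sub] img by simp
    qed
    have i: "\<sigma> p \<in> {1..K} - \<sigma> ` {..<p}" unfolding rest using that by simp
    have "sum d (\<sigma> ` {p..<K}) = (\<Sum>t\<in>{p..<K}. d (\<sigma> t))"
      by (rule sum.reindex[OF inj_on_subset[OF inj], unfolded o_def]) auto
    moreover have "\<sigma> ` {..<Suc p} = insert (\<sigma> p) (\<sigma> ` {..<p})" by (simp add: lessThan_Suc)
    ultimately show ?thesis using step[OF prefix i] rest that by simp
  qed
  have "real m * c = (\<Sum>p\<in>{K-m..<K}. c)" using \<open>m \<le> K\<close> by simp
  also have "\<dots> \<le> (\<Sum>p\<in>{K-m..<K}. H (\<sigma> ` {..<p}) - H (\<sigma> ` {..<Suc p}) + (\<Sum>t\<in>{p..<K}. d (\<sigma> t)))"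
    by (intro sum_mono peel) auto
  also have "\<dots> = H (\<sigma> ` {..<K-m}) - H (\<sigma> ` {..<K}) + (\<Sum>p\<in>{K-m..<K}. \<Sum>t\<in>{p..<K}. d (\<sigma> t))"
    using sum_Suc_diff'[of "K-m" K "\<lambda>p. - H (\<sigma> ` {..<p})"] by (simp add: sum.distrib)
  also have "\<dots> \<le> a + (\<Sum>p\<in>{K-m..<K}. \<Sum>t\<in>{p..<K}. d (\<sigma> t))"
    using bound[OF prefix[of "K-m"]] full img by simp
  finally show ?thesis .
qed

text \<open>Averaging over the \<open>K\<close> cyclic rotations of one ordering every leaf is peeled at every
  position equally often.\<close>

lemma cyclic_telescoping:
  fixes H :: "nat set \<Rightarrow> real" and d :: "nat \<Rightarrow> real"
  assumes step: "\<And>i S. S \<subseteq> {1..K} \<Longrightarrow> i \<in> {1..K} - S \<Longrightarrow> c \<le> H S - H (insert i S) + sum d ({1..K} - S)"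
    and full: "H {1..K} = 0" and bound: "\<And>S. S \<subseteq> {1..K} \<Longrightarrow> H S \<le> a" and "m \<le> K"
  shows "real K * real m * c \<le> real K * a + sum d {1..K} * (real m * (real m + 1) / 2)"
proof (cases "K = 0")
  case False
  define rot where "rot = (\<lambda>r t. (r + t) mod K + 1)"
  have rot: "bij_betw (rot r) {..<K} {1..K}" for r
  proof -
    have "bij_betw (Suc \<circ> (\<lambda>t. (r + t) mod K)) {..<K} {1..K}"
      using False by (intro bij_betw_trans[OF bij_betw_add_mod]) (auto simp: bij_betw_def image_Suc_lessThan)
    thus ?thesis by (simp add: rot_def o_def)
  qed
  have full_turn: "(\<Sum>r<K. d (rot r t)) = sum d {1..K}" for t
    using sum.reindex_bij_betw[OF rot[of t], of d] by (simp add: rot_def add.commute)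
  have "real K * real m * c = (\<Sum>r<K. real m * c)" by simp
  also have "\<dots> \<le> (\<Sum>r<K. a + (\<Sum>p\<in>{K-m..<K}. \<Sum>t\<in>{p..<K}. d (rot r t)))"
    by (intro sum_mono telescoping_along_ordering[OF step full bound \<open>m \<le> K\<close> rot])
  also have "\<dots> = real K * a + (\<Sum>p\<in>{K-m..<K}. \<Sum>t\<in>{p..<K}. \<Sum>r<K. d (rot r t))"
    by (simp add: sum.distrib sum.swap[of _ "{..<K}"])
  also have "\<dots> = real K * a + sum d {1..K} * (\<Sum>p\<in>{K-m..<K}. real (K - p))"
    by (simp add: full_turn sum_distrib_left mult.commute)
  also have "\<dots> = real K * a + sum d {1..K} * (real m * (real m + 1) / 2)"
    using \<open>m \<le> K\<close> by (simp only: sum_diff_atLeastLessThan)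
  finally show ?thesis .
qed simp

section \<open>The converse\<close>

definition expectation_on_index :: "('i \<times> 'q) pmf \<Rightarrow> 'i \<Rightarrow> ('i \<times> 'q \<Rightarrow> real) \<Rightarrow> real" where
  "expectation_on_index \<mu> i f = (\<Sum>x\<in>set_pmf \<mu>. pmf \<mu> x * (if fst x = i then f x else 0))"

lemma expectation_on_index_add:
  "expectation_on_index \<mu> i (\<lambda>x. f x + g x) = expectation_on_index \<mu> i f + expectation_on_index \<mu> i g"
  unfolding expectation_on_index_def sum.distrib[symmetric] by (intro sum.cong refl) (simp add: algebra_simps)

lemma expectation_on_index_diff:
  "expectation_on_index \<mu> i (\<lambda>x. f x - g x) = expectation_on_index \<mu> i f - expectation_on_index \<mu> i g"
  unfolding expectation_on_index_def sum_subtractf[symmetric] by (intro sum.cong refl) (simp add: algebra_simps)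

lemma expectation_on_index_sum:
  "expectation_on_index \<mu> i (\<lambda>x. \<Sum>j\<in>R. f j x) = (\<Sum>j\<in>R. expectation_on_index \<mu> i (f j))"
proof -
  have "expectation_on_index \<mu> i (\<lambda>x. \<Sum>j\<in>R. f j x)
      = (\<Sum>x\<in>set_pmf \<mu>. \<Sum>j\<in>R. pmf \<mu> x * (if fst x = i then f j x else 0))"
    unfolding expectation_on_index_def by (intro sum.cong refl) (simp add: sum_distrib_left)
  also have "\<dots> = (\<Sum>j\<in>R. expectation_on_index \<mu> i (f j))"
    unfolding expectation_on_index_def by (rule sum.swap)
  finally show ?thesis .
qed

lemma expectation_on_index_mono:
  "(\<And>x. x \<in> set_pmf \<mu> \<Longrightarrow> fst x = i \<Longrightarrow> f x \<le> g x) \<Longrightarrow> expectation_on_index \<mu> i f \<le> expectation_on_index \<mu> i g"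
  unfolding expectation_on_index_def by (intro sum_mono) (auto intro: mult_left_mono)

lemma expectation_on_index_indep:
  assumes fin: "finite (set_pmf \<mu>)" and indep: "map_pmf (\<lambda>x. (fst x, h x)) \<mu> = pair_pmf (pmf_of_set A) \<nu>"
    and A: "finite A" "i \<in> A"
  shows "expectation_on_index \<mu> i (\<lambda>x. \<phi> (h x)) = (\<Sum>x\<in>set_pmf \<mu>. pmf \<mu> x * \<phi> (h x)) / card A"
proof -
  let ?J = "map_pmf (\<lambda>x. (fst x, h x)) \<mu>"
  have \<nu>: "\<nu> = map_pmf h \<mu>"
    using arg_cong[OF indep, of "map_pmf snd"] by (simp add: map_snd_pair_pmf pmf.map_comp o_def)
  have A_ne: "A \<noteq> {}" using A by auto
  have set_A: "set_pmf (pmf_of_set A) = A" using A A_ne by simp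
  have pmf_A: "pmf (pmf_of_set A) i = 1 / card A" using A A_ne by simp
  have "expectation_on_index \<mu> i (\<lambda>x. \<phi> (h x))
      = (\<Sum>y\<in>set_pmf ?J. pmf ?J y * (if fst y = i then \<phi> (snd y) else 0))"
    unfolding expectation_on_index_def sum_set_pmf_map_pmf[OF fin] by (intro sum.cong refl) auto
  also have "\<dots> = (\<Sum>a\<in>A. \<Sum>v\<in>set_pmf \<nu>. pmf \<nu> v * (if a = i then \<phi> v else 0) / card A)"
    unfolding indep set_pair_pmf set_A sum.cartesian_product
    by (intro sum.cong refl) (auto simp: pmf_pair pmf_A)
  also have "\<dots> = (\<Sum>a\<in>A. if a = i then (\<Sum>v\<in>set_pmf \<nu>. pmf \<nu> v * \<phi> v / card A) else 0)"
    by (intro sum.cong refl) auto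
  also have "\<dots> = (\<Sum>v\<in>set_pmf \<nu>. pmf \<nu> v * \<phi> v) / card A"
    using A by (simp add: sum_divide_distrib)
  also have "\<dots> = (\<Sum>x\<in>set_pmf \<mu>. pmf \<mu> x * \<phi> (h x)) / card A"
    unfolding \<nu> sum_set_pmf_map_pmf[OF fin] ..
  finally show ?thesis .
qed

definition answer_ent :: "nat \<Rightarrow> nat \<Rightarrow> (nat \<Rightarrow> nat \<Rightarrow> (nat \<Rightarrow> bool list) \<Rightarrow> nat) \<Rightarrow> nat \<Rightarrow> nat \<Rightarrow> real" where
  "answer_ent N L ans j v = ent (map_pmf (ans j v) (files_pmf (N-1) L))"

definition centre_cond_ent ::
    "nat \<Rightarrow> nat \<Rightarrow> (nat \<Rightarrow> nat \<Rightarrow> (nat \<Rightarrow> bool list) \<Rightarrow> nat) \<Rightarrow> nat \<Rightarrow> nat set \<Rightarrow> real" where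
  "centre_cond_ent N L ans v S =
     ent (map_pmf (\<lambda>W. (ans N v W, restrict_files S W)) (files_pmf (N-1) L))
     - ent (map_pmf (restrict_files S) (files_pmf (N-1) L))"

text \<open>The leaves in \<open>S\<close> answer from their own files, so once \<open>W S\<close> is known the decoder only
  needs the answers of the other servers.\<close>

lemma file_determined_by_answers:
  assumes sch: "is_star_pir_scheme N L \<mu> ans" and iq: "(i, q) \<in> set_pmf \<mu>" and S: "S \<subseteq> {1..N-1}"
  obtains f where "\<And>W. W \<in> set_pmf (files_pmf (N-1) L) \<Longrightarrow>
    W i = f (\<lambda>j. if j \<in> {1..N-1} - S then ans j (q j) W else 0) (ans N (q N) W) (restrict_files S W)"
proof -
  define T where "T = {1..N-1} - S"
  define answers where "answers z g w = (\<lambda>k. if k \<in> {1..N} then if k = N then g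
      else if k \<in> T then z k else ans k (q k) w else 0)" for z g w
  obtain dec where dec: "\<forall>(\<theta>, Q, W)\<in>set_pmf (pir_joint \<mu> (N-1) L).
      dec (\<lambda>k. if k \<in> {1..N} then ans k (Q k) W else 0) (\<lambda>k. if k \<in> {1..N} then Q k else 0) = W \<theta>"
    using is_star_pir_schemeD(4)[OF sch] by blast
  have all_answers: "(\<lambda>k. if k \<in> {1..N} then ans k (q k) W else 0)
      = answers (\<lambda>j. if j \<in> T then ans j (q j) W else 0) (ans N (q N) W) (restrict_files S W)" for W
  proof
    fix k
    show "(if k \<in> {1..N} then ans k (q k) W else 0)
        = answers (\<lambda>j. if j \<in> T then ans j (q j) W else 0) (ans N (q N) W) (restrict_files S W) k"
    proof (cases "k \<in> S")
      case True
      hence "k \<in> {1..N-1}" using S by blast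
      hence k: "k \<in> {1..N}" "k \<noteq> N" "k \<notin> T" "star_store N k = {k}"
        using True by (auto simp: T_def star_store_def)
      hence "ans k (q k) W = ans k (q k) (restrict_files S W)"
        using True by (intro is_star_pir_schemeD(3)[OF sch]) (auto simp: restrict_files_def)
      thus ?thesis using k by (simp add: answers_def)
    qed (auto simp: answers_def T_def)
  qed
  show ?thesis
  proof
    fix W assume "W \<in> set_pmf (files_pmf (N-1) L)"
    thus "W i = (\<lambda>z g w. dec (answers z g w) (\<lambda>k. if k \<in> {1..N} then q k else 0))
        (\<lambda>j. if j \<in> {1..N-1} - S then ans j (q j) W else 0) (ans N (q N) W) (restrict_files S W)"
      using dec iq unfolding T_def[symmetric] all_answers[symmetric] by (fastforce simp: set_pmf_pir_joint)
  qed
qed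

lemma decoding_step_le:
  assumes sch: "is_star_pir_scheme N L \<mu> ans" and iq: "(i, q) \<in> set_pmf \<mu>"
    and S: "S \<subseteq> {1..N-1}" and i: "i \<in> {1..N-1} - S"
  shows "real L \<le> centre_cond_ent N L ans (q N) S - centre_cond_ent N L ans (q N) (insert i S)
                  + (\<Sum>j\<in>{1..N-1} - S. answer_ent N L ans j (q j))"
proof -
  let ?F = "files_pmf (N-1) L"
  define leaves where "leaves W = (\<lambda>j. if j \<in> {1..N-1} - S then ans j (q j) W else 0)" for W
  obtain f where f: "\<And>W. W \<in> set_pmf ?F \<Longrightarrow> W i = f (leaves W) (ans N (q N) W) (restrict_files S W)"
    using file_determined_by_answers[OF sch iq S] unfolding leaves_def by blast
  have "ent (map_pmf (\<lambda>W. (ans N (q N) W, restrict_files (insert i S) W)) ?F)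
      \<le> ent (map_pmf (\<lambda>W. (leaves W, (ans N (q N) W, restrict_files S W))) ?F)"
    by (rule ent_map_pmf_factor_le[where h = "\<lambda>(z, g, w). (g, w(i := f z g w))"])
      (auto simp: f restrict_files_insert)
  also have "\<dots> \<le> ent (map_pmf leaves ?F) + ent (map_pmf (\<lambda>W. (ans N (q N) W, restrict_files S W)) ?F)"
    by (rule ent_map_pmf_pair_le) simp
  finally have chain: "ent (map_pmf (\<lambda>W. (ans N (q N) W, restrict_files (insert i S) W)) ?F)
      \<le> ent (map_pmf leaves ?F) + ent (map_pmf (\<lambda>W. (ans N (q N) W, restrict_files S W)) ?F)" .
  have "ent (map_pmf leaves ?F) \<le> (\<Sum>j\<in>{1..N-1} - S. answer_ent N L ans j (q j))"
    unfolding leaves_def answer_ent_def by (rule ent_map_pmf_fun_le_sum) auto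
  moreover have "ent (map_pmf (restrict_files (insert i S)) ?F) = ent (map_pmf (restrict_files S) ?F) + real L"
    using S i finite_subset[OF S] by (simp add: ent_restrict_files algebra_simps)
  ultimately show ?thesis using chain unfolding centre_cond_ent_def by linarith
qed

definition mean_centre_cond_ent ::
    "nat \<Rightarrow> nat \<Rightarrow> (nat \<times> (nat \<Rightarrow> nat)) pmf \<Rightarrow> (nat \<Rightarrow> nat \<Rightarrow> (nat \<Rightarrow> bool list) \<Rightarrow> nat) \<Rightarrow> nat set \<Rightarrow> real" where
  "mean_centre_cond_ent N L \<mu> ans S = (\<Sum>x\<in>set_pmf \<mu>. pmf \<mu> x * centre_cond_ent N L ans (snd x N) S)"

definition mean_answer_ent ::
    "nat \<Rightarrow> nat \<Rightarrow> (nat \<times> (nat \<Rightarrow> nat)) pmf \<Rightarrow> (nat \<Rightarrow> nat \<Rightarrow> (nat \<Rightarrow> bool list) \<Rightarrow> nat) \<Rightarrow> nat \<Rightarrow> real" where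
  "mean_answer_ent N L \<mu> ans j = (\<Sum>x\<in>set_pmf \<mu>. pmf \<mu> x * answer_ent N L ans j (snd x j))"

text \<open>Privacy makes each server's query independent of the index, so conditioning the
  decoding step on \<open>\<theta> = i\<close> and averaging turns every term into its unconditional mean.\<close>

lemma mean_decoding_step_le:
  assumes sch: "is_star_pir_scheme N L \<mu> ans" and N: "N \<ge> 2"
    and S: "S \<subseteq> {1..N-1}" and i: "i \<in> {1..N-1} - S"
  shows "real L \<le> mean_centre_cond_ent N L \<mu> ans S - mean_centre_cond_ent N L \<mu> ans (insert i S)
                  + (\<Sum>j\<in>{1..N-1} - S. mean_answer_ent N L \<mu> ans j)"
proof -
  have fin: "finite (set_pmf \<mu>)" by (rule is_star_pir_schemeD(1)[OF sch])
  have average: "expectation_on_index \<mu> i (\<lambda>x. \<phi> (snd x j))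
      = (\<Sum>x\<in>set_pmf \<mu>. pmf \<mu> x * \<phi> (snd x j)) / real (N - 1)" if "j \<in> {1..N}" for j \<phi>
    using expectation_on_index_indep[OF fin star_pir_query_indep[OF sch N that]] i by simp
  have N_in: "N \<in> {1..N}" using N by simp
  have "real L / real (N - 1) = expectation_on_index \<mu> i (\<lambda>x. real L)"
    using average[OF N_in, of "\<lambda>_. real L"] fin by (simp add: sum_distrib_right[symmetric] sum_pmf_eq_1)
  also have "\<dots> \<le> expectation_on_index \<mu> i (\<lambda>x. centre_cond_ent N L ans (snd x N) S
      - centre_cond_ent N L ans (snd x N) (insert i S) + (\<Sum>j\<in>{1..N-1} - S. answer_ent N L ans j (snd x j)))"
    by (rule expectation_on_index_mono) (metis decoding_step_le[OF sch _ S i] prod.collapse)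
  also have "\<dots> = (mean_centre_cond_ent N L \<mu> ans S - mean_centre_cond_ent N L \<mu> ans (insert i S)
                    + (\<Sum>j\<in>{1..N-1} - S. mean_answer_ent N L \<mu> ans j)) / real (N - 1)"
  proof -
    have "expectation_on_index \<mu> i (\<lambda>x. answer_ent N L ans j (snd x j)) = mean_answer_ent N L \<mu> ans j / real (N - 1)"
      if "j \<in> {1..N-1} - S" for j
    proof -
      have "j \<in> {1..N}" using that by auto
      from average[OF this, of "answer_ent N L ans j"] show ?thesis by (simp add: mean_answer_ent_def)
    qed
    thus ?thesis
      unfolding expectation_on_index_add expectation_on_index_diff expectation_on_index_sum
        average[OF N_in, of "\<lambda>v. centre_cond_ent N L ans v S"]
        average[OF N_in, of "\<lambda>v. centre_cond_ent N L ans v (insert i S)"] mean_centre_cond_ent_def[symmetric]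
      by (simp add: diff_divide_distrib add_divide_distrib sum_divide_distrib)
  qed
  finally show ?thesis using N by (simp add: divide_le_cancel)
qed

lemma centre_cond_ent_all_leaves:
  assumes sch: "is_star_pir_scheme N L \<mu> ans" and "N \<ge> 1"
  shows "centre_cond_ent N L ans v {1..N-1} = 0"
proof -
  have "ans N v W = ans N v (restrict_files {1..N-1} W)" for W
    by (rule is_star_pir_schemeD(3)[OF sch]) (use \<open>N \<ge> 1\<close> in \<open>auto simp: star_store_def restrict_files_def\<close>)
  hence "ent (map_pmf (\<lambda>W. (ans N v W, restrict_files {1..N-1} W)) (files_pmf (N-1) L))
      = ent (map_pmf (restrict_files {1..N-1}) (files_pmf (N-1) L))"
    by (intro ent_map_pmf_eqI[where h = "\<lambda>w. (ans N v w, w)" and h' = snd]) auto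
  thus ?thesis by (simp add: centre_cond_ent_def)
qed

lemma centre_cond_ent_le_answer_ent: "centre_cond_ent N L ans v S \<le> answer_ent N L ans N v"
  using ent_map_pmf_pair_le[OF finite_set_pmf_files_pmf, of "ans N v" "restrict_files S" "N-1" L]
  by (simp add: centre_cond_ent_def answer_ent_def)

lemma mean_answer_ent_nonneg: "0 \<le> mean_answer_ent N L \<mu> ans j"
  unfolding mean_answer_ent_def answer_ent_def by (intro sum_nonneg mult_nonneg_nonneg ent_nonneg) auto

lemma mean_answer_ent_le_ent_answer:
  assumes "finite (set_pmf \<mu>)"
  shows "mean_answer_ent N L \<mu> ans k \<le> ent (map_pmf (\<lambda>(\<theta>, Q, W). ans k (Q k) W) (pir_joint \<mu> (N-1) L))"
  using ent_bind_pmf_ge[OF assms, of "\<lambda>x. map_pmf (ans k (snd x k)) (files_pmf (N-1) L)"]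
  by (simp add: map_pmf_pir_joint mean_answer_ent_def answer_ent_def case_prod_beta)

definition download :: "nat \<Rightarrow> nat \<Rightarrow> (nat \<times> (nat \<Rightarrow> nat)) pmf \<Rightarrow> (nat \<Rightarrow> nat \<Rightarrow> (nat \<Rightarrow> bool list) \<Rightarrow> nat) \<Rightarrow> real" where
  "download N L \<mu> ans = (\<Sum>i=1..N. ent (map_pmf (\<lambda>(\<theta>, Q, W). ans i (Q i) W) (pir_joint \<mu> (N - 1) L)))"

lemma pir_rate_eq: "pir_rate N L \<mu> ans = real L / download N L \<mu> ans"
  unfolding pir_rate_def download_def ..

lemma download_lower_bound:
  assumes sch: "is_star_pir_scheme N L \<mu> ans" and N: "N \<ge> 2" and m: "m \<le> N - 1"
  shows "real (N-1) * real m * real L \<le> (real (N-1) + real m * (real m + 1) / 2) * download N L \<mu> ans"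
proof -
  have N1: "N \<ge> 1" using N by simp
  define D where "D = (\<Sum>j\<in>{1..N-1}. mean_answer_ent N L \<mu> ans j)"
  define a where "a = mean_answer_ent N L \<mu> ans N"
  define q where "q = real m * (real m + 1) / 2"
  have "real (N-1) * real m * real L \<le> real (N-1) * a + D * q"
    unfolding D_def a_def q_def
  proof (rule cyclic_telescoping[OF mean_decoding_step_le[OF sch N] _ _ m])
    show "mean_centre_cond_ent N L \<mu> ans {1..N-1} = 0"
      unfolding mean_centre_cond_ent_def centre_cond_ent_all_leaves[OF sch N1] by simp
    show "mean_centre_cond_ent N L \<mu> ans S \<le> mean_answer_ent N L \<mu> ans N" for S
      unfolding mean_centre_cond_ent_def mean_answer_ent_def
      by (intro sum_mono mult_left_mono centre_cond_ent_le_answer_ent) auto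
  qed
  moreover have "D + a \<le> download N L \<mu> ans"
  proof -
    have "{1..N} = insert N {1..N-1}" using N by auto
    hence "D + a = (\<Sum>k=1..N. mean_answer_ent N L \<mu> ans k)" using N by (simp add: D_def a_def)
    also have "\<dots> \<le> download N L \<mu> ans"
      unfolding download_def
      by (intro sum_mono mean_answer_ent_le_ent_answer is_star_pir_schemeD(1)[OF sch])
    finally show ?thesis .
  qed
  moreover have "real (N-1) * a + D * q \<le> (real (N-1) + q) * (D + a)"
  proof -
    have "0 \<le> real (N-1) * D + q * a"
      by (simp add: D_def a_def q_def sum_nonneg mean_answer_ent_nonneg)
    moreover have "(real (N-1) + q) * (D + a) = real (N-1) * a + D * q + (real (N-1) * D + q * a)"
      by (simp add: algebra_simps)
    ultimately show ?thesis by linarith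
  qed
  moreover have "0 \<le> real (N-1) + q" by (simp add: q_def)
  ultimately show ?thesis
    unfolding q_def[symmetric] by (meson mult_left_mono order_trans)
qed

lemma pir_rate_le:
  assumes sch: "is_star_pir_scheme N L \<mu> ans" and N: "N \<ge> 2" and L: "L \<ge> 1"
    and m: "1 \<le> m" "m \<le> N - 1"
  shows "pir_rate N L \<mu> ans \<le> (real (N-1) + real m * (real m + 1) / 2) / (real (N-1) * real m)"
proof -
  define X where "X = real (N-1) + real m * (real m + 1) / 2"
  define Y where "Y = real (N-1) * real m"
  define T where "T = download N L \<mu> ans"
  have bound: "Y * real L \<le> X * T"
    unfolding X_def Y_def T_def by (rule download_lower_bound[OF sch N m(2)])
  have "Y > 0" "real L > 0" using N m L by (simp_all add: Y_def)
  have "X > 0" unfolding X_def using N by (intro add_pos_nonneg) auto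
  have "0 < X * T" using mult_pos_pos[OF \<open>Y > 0\<close> \<open>real L > 0\<close>] bound by linarith
  hence "T > 0" using zero_less_mult_pos \<open>X > 0\<close> by blast
  with bound \<open>Y > 0\<close> have "real L / T \<le> X / Y" by (simp add: field_simps)
  thus ?thesis unfolding pir_rate_eq T_def X_def Y_def .
qed

lemma floor_sqrt_bound:
  fixes K :: nat
  assumes "K \<ge> 4"
  defines "m \<equiv> nat \<lfloor>sqrt K\<rfloor>"
  shows "1 \<le> m" and "m \<le> K"
    and "(real K + real m * (real m + 1) / 2) / (real K * real m) \<le> 3 / sqrt K"
proof -
  define s where "s = sqrt (real K)"
  have s2: "s \<ge> 2" unfolding s_def using assms real_sqrt_le_mono[of 4 "real K"] by simp
  have ss: "s * s = real K" unfolding s_def by simp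
  have fl: "real m \<le> s" "s < real m + 1" unfolding m_def s_def using s2 s_def by linarith+
  have m2: "real m \<ge> s / 2" using fl s2 by linarith
  thus "1 \<le> m" using s2 by simp
  have "s \<le> s * s" using s2 by simp
  thus "m \<le> K" using fl ss by simp
  have "(real K + real m * (real m + 1) / 2) / (real K * real m) = 1 / real m + (real m + 1) / (2 * real K)"
    using m2 s2 assms by (simp add: field_simps)
  also have "1 / real m \<le> 2 / s" using m2 s2 by (simp add: field_simps)
  also have "(real m + 1) / (2 * real K) \<le> 1 / s"
  proof -
    have "real m + 1 \<le> 2 * s" using fl s2 by linarith
    hence "(real m + 1) / (2 * real K) \<le> 2 * s / (2 * (s * s))" unfolding ss using assms
      by (intro divide_right_mono) auto
    also have "\<dots> = 1 / s" using s2 by (simp add: field_simps)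
    finally show ?thesis .
  qed
  finally show "(real K + real m * (real m + 1) / 2) / (real K * real m) \<le> 3 / sqrt K"
    by (simp add: s_def)
qed

lemma pir_rate_upper:
  assumes sch: "is_star_pir_scheme N L \<mu> ans" and N: "N \<ge> 5" and L: "L \<ge> 1"
  shows "pir_rate N L \<mu> ans \<le> 5 / sqrt N"
proof -
  have K: "N - 1 \<ge> 4" using N by simp
  note m = floor_sqrt_bound[OF K]
  have "pir_rate N L \<mu> ans \<le> 3 / sqrt (N - 1)"
    using pir_rate_le[OF sch _ L m(1,2)] m(3) N by simp
  also have "\<dots> \<le> 5 / sqrt N"
  proof -
    have "sqrt (9 * real N) \<le> sqrt (25 * real (N - 1))" using N by simp
    hence "3 * sqrt N \<le> 5 * sqrt (N - 1)" by (simp add: real_sqrt_mult)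
    thus ?thesis using N by (simp add: field_simps)
  qed
  finally show ?thesis .
qed

section \<open>Random permutations and blocks\<close>

lemma pair_pmf_conv_bind_map_pmf: "pair_pmf A B = bind_pmf A (\<lambda>a. map_pmf (Pair a) B)"
  by (simp add: pair_pmf_def map_pmf_def)

lemma map_pmf_pair_indep:
  assumes "\<And>a. a \<in> set_pmf A \<Longrightarrow> map_pmf (f a) B = \<nu>"
  shows "map_pmf (\<lambda>(a, b). (a, f a b)) (pair_pmf A B) = pair_pmf A \<nu>"
  unfolding pair_pmf_conv_bind_map_pmf map_bind_pmf
proof (intro bind_pmf_cong refl)
  fix a assume "a \<in> set_pmf A"
  have "map_pmf (\<lambda>(a, b). (a, f a b)) (map_pmf (Pair a) B) = map_pmf (Pair a) (map_pmf (f a) B)"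
    by (simp add: pmf.map_comp o_def)
  thus "map_pmf (\<lambda>(a, b). (a, f a b)) (map_pmf (Pair a) B) = map_pmf (Pair a) \<nu>"
    using assms \<open>a \<in> set_pmf A\<close> by simp
qed

lemma map_pmf_add_mod_uniform:
  fixes K :: nat
  assumes "0 < K"
  shows "map_pmf (\<lambda>u. (\<theta> + u) mod K) (pmf_of_set {..<K}) = pmf_of_set {..<K}"
  using assms by (intro map_pmf_of_set_bij_betw bij_betw_add_mod) auto

lemma map_pmf_permutes_pair:
  assumes A: "finite A" and ij: "i \<in> A" "j \<in> A" "i \<noteq> j" and ij': "i' \<in> A" "j' \<in> A" "i' \<noteq> j'"
  shows "map_pmf (\<lambda>\<sigma>. (\<sigma> i', \<sigma> j')) (pmf_of_set {\<sigma>. \<sigma> permutes A})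
       = map_pmf (\<lambda>\<sigma>. (\<sigma> i, \<sigma> j)) (pmf_of_set {\<sigma>. \<sigma> permutes A})"
proof -
  define j1 where "j1 = Transposition.transpose i' i j'"
  define \<tau> where "\<tau> = Transposition.transpose j1 j \<circ> Transposition.transpose i' i"
  have j1: "j1 \<in> A" "j1 \<noteq> i" unfolding j1_def using ij ij' by (auto simp: Transposition.transpose_def)
  have \<tau>: "\<tau> permutes A" unfolding \<tau>_def
    by (intro permutes_compose permutes_swap_id) (use ij ij' j1 in auto)
  have \<tau>_ij: "\<tau> i' = i" "\<tau> j' = j"
    using j1 ij unfolding \<tau>_def by (auto simp: Transposition.transpose_def j1_def)
  have "map_pmf (\<lambda>\<sigma>. \<sigma> \<circ> \<tau>) (pmf_of_set {\<sigma>. \<sigma> permutes A}) = pmf_of_set {\<sigma>. \<sigma> permutes A}"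
  proof (rule map_pmf_of_set_bij_betw)
    show "bij_betw (\<lambda>\<sigma>. \<sigma> \<circ> \<tau>) {\<sigma>. \<sigma> permutes A} {\<sigma>. \<sigma> permutes A}"
      by (rule bij_betw_byWitness[where f' = "\<lambda>\<sigma>. \<sigma> \<circ> inv \<tau>"])
        (use \<tau> permutes_inv_o[OF \<tau>] permutes_inv[OF \<tau>] in \<open>auto simp: o_assoc[symmetric] intro: permutes_compose\<close>)
  qed (use A in \<open>auto simp: finite_permutations intro: permutes_id\<close>)
  hence "map_pmf (\<lambda>\<sigma>. (\<sigma> i', \<sigma> j')) (pmf_of_set {\<sigma>. \<sigma> permutes A})
      = map_pmf (\<lambda>\<sigma>. (\<sigma> i', \<sigma> j')) (map_pmf (\<lambda>\<sigma>. \<sigma> \<circ> \<tau>) (pmf_of_set {\<sigma>. \<sigma> permutes A}))" by simp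
  thus ?thesis by (simp add: pmf.map_comp o_def \<tau>_ij)
qed

text \<open>Leaves \<open>j\<close> and \<open>j'\<close> lie in the same block of size \<open>g\<close> when \<open>\<sigma> j div g = \<sigma> j' div g\<close>.\<close>

definition same_block_prob :: "nat \<Rightarrow> nat \<Rightarrow> real" where
  "same_block_prob K g = measure_pmf.prob (pmf_of_set {\<sigma>. \<sigma> permutes {1..K}}) {\<sigma>. \<sigma> 2 div g = \<sigma> 1 div g}"

lemma same_block_prob_nonneg: "0 \<le> same_block_prob K g"
  and same_block_prob_le_1: "same_block_prob K g \<le> 1"
  unfolding same_block_prob_def by auto

lemma same_block_law:
  assumes "K \<ge> 2" "i \<in> {1..K}" "j \<in> {1..K}" "j \<noteq> i"
  shows "map_pmf (\<lambda>\<sigma>. \<sigma> j div g = \<sigma> i div g) (pmf_of_set {\<sigma>. \<sigma> permutes {1..K}})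
       = bernoulli_pmf (same_block_prob K g)"
proof (rule pmf_eqI)
  fix b :: bool
  let ?U = "pmf_of_set {\<sigma>. \<sigma> permutes {1..K}}"
  have "map_pmf (\<lambda>\<sigma>. \<sigma> j div g = \<sigma> i div g) ?U = map_pmf (\<lambda>(a, b). a div g = b div g) (map_pmf (\<lambda>\<sigma>. (\<sigma> j, \<sigma> i)) ?U)"
    by (simp add: pmf.map_comp o_def)
  also have "map_pmf (\<lambda>\<sigma>. (\<sigma> j, \<sigma> i)) ?U = map_pmf (\<lambda>\<sigma>. (\<sigma> 2, \<sigma> 1)) ?U"
    by (rule map_pmf_permutes_pair) (use assms in auto)
  finally have "map_pmf (\<lambda>\<sigma>. \<sigma> j div g = \<sigma> i div g) ?U = map_pmf (\<lambda>\<sigma>. \<sigma> 2 div g = \<sigma> 1 div g) ?U"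
    by (simp add: pmf.map_comp o_def)
  moreover have "pmf (map_pmf (\<lambda>\<sigma>. \<sigma> 2 div g = \<sigma> 1 div g) ?U) True = same_block_prob K g"
    by (simp add: pmf_map vimage_def same_block_prob_def)
  ultimately show "pmf (map_pmf (\<lambda>\<sigma>. \<sigma> j div g = \<sigma> i div g) ?U) b = pmf (bernoulli_pmf (same_block_prob K g)) b"
    using same_block_prob_nonneg same_block_prob_le_1 by (cases b) (simp_all add: pmf_False_conv_True)
qed

lemma card_block_le:
  assumes "\<sigma> permutes {1..K}" "g \<ge> 1"
  shows "card {j\<in>{1..K}. \<sigma> j div g = b} \<le> g"
proof -
  have "card {j\<in>{1..K}. \<sigma> j div g = b} \<le> card {b * g..<b * g + g}"
  proof (rule card_inj_on_le)
    show "inj_on \<sigma> {j\<in>{1..K}. \<sigma> j div g = b}" using permutes_inj_on[OF assms(1)] .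
    show "\<sigma> ` {j\<in>{1..K}. \<sigma> j div g = b} \<subseteq> {b * g..<b * g + g}"
    proof
      fix n assume "n \<in> \<sigma> ` {j\<in>{1..K}. \<sigma> j div g = b}"
      hence "n div g = b" by auto
      moreover have "n = n div g * g + n mod g" "n mod g < g" using assms(2) by simp_all
      ultimately show "n \<in> {b * g..<b * g + g}" by (metis atLeastLessThan_iff le_add1 add_less_cancel_left)
    qed
  qed simp
  thus ?thesis by simp
qed

lemma sum_card_filter_swap:
  assumes "finite A" "finite B"
  shows "(\<Sum>b\<in>B. card {a\<in>A. R a b}) = (\<Sum>a\<in>A. card {b\<in>B. R a b})"
proof -
  have card: "card {x\<in>X. P x} = (\<Sum>x\<in>X. if P x then 1 else 0)" if "finite X" for X :: "'c set" and P
    using that by (simp add: sum.If_cases Int_def)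
  have "(\<Sum>b\<in>B. card {a\<in>A. R a b}) = (\<Sum>b\<in>B. \<Sum>a\<in>A. if R a b then 1 else 0)"
    using assms by (simp only: card)
  also have "\<dots> = (\<Sum>a\<in>A. \<Sum>b\<in>B. if R a b then 1 else 0)" by (rule sum.swap)
  also have "\<dots> = (\<Sum>a\<in>A. card {b\<in>B. R a b})"
    using assms by (simp only: card)
  finally show ?thesis .
qed

lemma same_block_prob_eq_card:
  assumes "K \<ge> 2" "j \<in> {2..K}"
  shows "same_block_prob K g = card {\<sigma>\<in>{\<sigma>. \<sigma> permutes {1..K}}. \<sigma> j div g = \<sigma> 1 div g} / card {\<sigma>. \<sigma> permutes {1..K}}"
proof -
  let ?P = "{\<sigma>. \<sigma> permutes {1..K}}"
  have "map_pmf (\<lambda>\<sigma>. \<sigma> j div g = \<sigma> 1 div g) (pmf_of_set ?P) = bernoulli_pmf (same_block_prob K g)"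
    by (rule same_block_law) (use assms in auto)
  hence "same_block_prob K g = measure_pmf.prob (pmf_of_set ?P) {\<sigma>. \<sigma> j div g = \<sigma> 1 div g}"
    using same_block_prob_nonneg same_block_prob_le_1 pmf_map[of "\<lambda>\<sigma>. \<sigma> j div g = \<sigma> 1 div g" "pmf_of_set ?P" True]
    by (simp add: vimage_def)
  also have "\<dots> = card {\<sigma>\<in>?P. \<sigma> j div g = \<sigma> 1 div g} / card ?P"
    by (subst measure_pmf_of_set) (auto intro: finite_permutations permutes_id simp: Int_def)
  finally show ?thesis .
qed

text \<open>Double counting: on average a leaf shares its block with at most \<open>g - 1\<close> others.\<close>

lemma same_block_prob_bound:
  assumes K: "K \<ge> 2" and g: "g \<ge> 1"
  shows "real (K - 1) * same_block_prob K g \<le> real g - 1"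
proof -
  let ?P = "{\<sigma>. \<sigma> permutes {1..K}}"
  have P: "finite ?P" "card ?P > 0" by (auto simp: card_gt_0_iff intro: finite_permutations permutes_id)
  have others: "card {j\<in>{2..K}. \<sigma> j div g = \<sigma> 1 div g} \<le> g - 1" if "\<sigma> \<in> ?P" for \<sigma>
  proof -
    have "{j\<in>{2..K}. \<sigma> j div g = \<sigma> 1 div g} = {j\<in>{1..K}. \<sigma> j div g = \<sigma> 1 div g} - {1}" by auto
    moreover have "1 \<in> {j\<in>{1..K}. \<sigma> j div g = \<sigma> 1 div g}" using K by auto
    ultimately show ?thesis using card_block_le[of \<sigma> K g "\<sigma> 1 div g"] that g by (simp add: card_Diff_singleton)
  qed
  have "(\<Sum>j\<in>{2..K}. card {\<sigma>\<in>?P. \<sigma> j div g = \<sigma> 1 div g}) = (\<Sum>\<sigma>\<in>?P. card {j\<in>{2..K}. \<sigma> j div g = \<sigma> 1 div g})"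
    using P by (intro sum_card_filter_swap) auto
  also have "\<dots> \<le> (\<Sum>\<sigma>\<in>?P. g - 1)" by (rule sum_mono) (rule others)
  finally have "(\<Sum>j\<in>{2..K}. card {\<sigma>\<in>?P. \<sigma> j div g = \<sigma> 1 div g}) \<le> card ?P * (g - 1)" by simp
  hence "real (\<Sum>j\<in>{2..K}. card {\<sigma>\<in>?P. \<sigma> j div g = \<sigma> 1 div g}) \<le> real (card ?P * (g - 1))"
    by (simp only: of_nat_le_iff)
  also have "\<dots> = real (card ?P) * (real g - 1)" using g by (simp add: of_nat_diff)
  finally have count: "real (\<Sum>j\<in>{2..K}. card {\<sigma>\<in>?P. \<sigma> j div g = \<sigma> 1 div g}) \<le> real (card ?P) * (real g - 1)" .
  have "real (K - 1) * same_block_prob K g = (\<Sum>j\<in>{2..K}. same_block_prob K g)" by simp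
  also have "\<dots> = (\<Sum>j\<in>{2..K}. real (card {\<sigma>\<in>?P. \<sigma> j div g = \<sigma> 1 div g}) / card ?P)"
    by (rule sum.cong[OF refl same_block_prob_eq_card[OF K]])
  also have "\<dots> = real (\<Sum>j\<in>{2..K}. card {\<sigma>\<in>?P. \<sigma> j div g = \<sigma> 1 div g}) / card ?P"
    by (simp only: sum_divide_distrib of_nat_sum)
  also have "\<dots> \<le> real g - 1" using count P by (simp add: pos_divide_le_eq mult.commute)
  finally show ?thesis .
qed

section \<open>The block scheme\<close>

text \<open>The decoder sees only queries and answers, so \<open>\<theta>\<close> is secret-shared: leaf 1 receives
  \<open>(\<theta> + u) mod (N - 1)\<close> and the centre receives \<open>u\<close> together with \<open>\<sigma>\<close>. Queries and answers are
  natural numbers encoding their content with \<open>to_nat\<close>; a leaf answers \<open>0\<close> when it is not asked.\<close>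

definition block_size :: "nat \<Rightarrow> nat" where
  "block_size N = nat \<lfloor>sqrt (real (N - 1))\<rfloor> + 1"

definition num_blocks :: "nat \<Rightarrow> nat" where
  "num_blocks N = (N - 1) div block_size N + 1"

definition block :: "nat \<Rightarrow> nat list \<Rightarrow> nat \<Rightarrow> nat set" where
  "block N ps b = {j\<in>{1..N-1}. ps ! (j - 1) div block_size N = b}"

definition asked :: "nat \<Rightarrow> nat \<Rightarrow> (nat \<Rightarrow> nat) \<Rightarrow> bool \<Rightarrow> nat \<Rightarrow> bool" where
  "asked N \<theta> \<sigma> c j \<longleftrightarrow> (if j = \<theta> then c else \<sigma> j div block_size N = \<sigma> \<theta> div block_size N)"

definition block_query :: "nat \<Rightarrow> nat \<Rightarrow> (nat \<Rightarrow> nat) \<Rightarrow> bool \<Rightarrow> nat \<Rightarrow> nat \<Rightarrow> nat" where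
  "block_query N \<theta> \<sigma> c u j =
     (if j \<in> {1..N-1} then to_nat (asked N \<theta> \<sigma> c j, if j = 1 then (\<theta> + u) mod (N - 1) else 0)
      else if j = N then to_nat (map \<sigma> [1..<N], u) else 0)"

definition query_seed :: "nat \<Rightarrow> ((nat \<Rightarrow> nat) \<times> bool \<times> nat) pmf" where
  "query_seed N = pair_pmf (pmf_of_set {\<sigma>. \<sigma> permutes {1..N-1}})
     (pair_pmf (bernoulli_pmf (same_block_prob (N - 1) (block_size N))) (pmf_of_set {..<N-1}))"

definition block_query_pmf :: "nat \<Rightarrow> (nat \<times> (nat \<Rightarrow> nat)) pmf" where
  "block_query_pmf N = map_pmf (\<lambda>(\<theta>, \<sigma>, c, u). (\<theta>, block_query N \<theta> \<sigma> c u)) (pair_pmf (pmf_of_set {1..N-1}) (query_seed N))"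

definition xor_files :: "nat \<Rightarrow> (nat \<Rightarrow> bool list) \<Rightarrow> nat set \<Rightarrow> bool list" where
  "xor_files L W B = map (\<lambda>k. odd (card {j\<in>B. W j ! k})) [0..<L]"

definition block_answer :: "nat \<Rightarrow> nat \<Rightarrow> nat \<Rightarrow> (nat \<Rightarrow> bool list) \<Rightarrow> nat" where
  "block_answer N i q W =
     (if i = N then to_nat (map (\<lambda>b. xor_files (N - 1) W (block N (fst (from_nat q :: nat list \<times> nat)) b)) [0..<num_blocks N])
      else if fst (from_nat q :: bool \<times> nat) then Suc (to_nat (W i)) else 0)"

definition decode_index :: "nat \<Rightarrow> (nat \<Rightarrow> nat) \<Rightarrow> nat" where
  "decode_index N Q = (let t = (snd (from_nat (Q 1) :: bool \<times> nat) + (N - 1 - snd (from_nat (Q N) :: nat list \<times> nat))) mod (N - 1)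
                       in if t = 0 then N - 1 else t)"

definition block_decode :: "nat \<Rightarrow> (nat \<Rightarrow> nat) \<Rightarrow> (nat \<Rightarrow> nat) \<Rightarrow> bool list" where
  "block_decode N A Q =
     (let \<theta> = decode_index N Q; ps = fst (from_nat (Q N) :: nat list \<times> nat); b = ps ! (\<theta> - 1) div block_size N
      in if A \<theta> \<noteq> 0 then from_nat (A \<theta> - 1)
         else map (\<lambda>k. (from_nat (A N) :: bool list list) ! b ! k
                        \<noteq> odd (card {j\<in>block N ps b - {\<theta>}. (from_nat (A j - 1) :: bool list) ! k})) [0..<N-1])"

lemma unshift_mod_eq:
  fixes K \<theta> u :: nat
  assumes "\<theta> \<in> {1..K}" "u < K"
  shows "(let t = ((\<theta> + u) mod K + (K - u)) mod K in if t = 0 then K else t) = \<theta>"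
proof -
  have "((\<theta> + u) mod K + (K - u)) mod K = (\<theta> + u + (K - u)) mod K" by (rule mod_add_left_eq)
  also have "\<theta> + u + (K - u) = \<theta> + K" using assms by simp
  finally have "((\<theta> + u) mod K + (K - u)) mod K = (\<theta> + K) mod K" .
  thus ?thesis using assms by (cases "\<theta> = K") (auto simp: Let_def)
qed

lemma xor_files_remove:
  assumes "finite B" "\<theta> \<in> B" "length (W \<theta>) = L"
  shows "map (\<lambda>k. xor_files L W B ! k \<noteq> odd (card {j\<in>B - {\<theta>}. W j ! k})) [0..<L] = W \<theta>"
proof -
  have "(odd (card {j\<in>B. W j ! k}) \<noteq> odd (card {j\<in>B - {\<theta>}. W j ! k})) = W \<theta> ! k" for k
  proof (cases "W \<theta> ! k")
    case True
    hence "{j\<in>B. W j ! k} = insert \<theta> {j\<in>B - {\<theta>}. W j ! k}" using assms by auto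
    thus ?thesis using assms True by simp
  next
    case False
    hence "{j\<in>B. W j ! k} = {j\<in>B - {\<theta>}. W j ! k}" by auto
    thus ?thesis using False by simp
  qed
  hence "map (\<lambda>k. xor_files L W B ! k \<noteq> odd (card {j\<in>B - {\<theta>}. W j ! k})) [0..<L]
      = map (\<lambda>k. W \<theta> ! k) [0..<length (W \<theta>)]"
    unfolding assms(3) by (intro map_cong refl) (simp add: xor_files_def)
  thus ?thesis by (simp only: map_nth)
qed

lemma decode_index_block_query:
  assumes N: "N \<ge> 3" and \<theta>: "\<theta> \<in> {1..N-1}" and u: "u < N - 1"
  shows "decode_index N (\<lambda>i. if i \<in> {1..N} then block_query N \<theta> \<sigma> c u i else 0) = \<theta>"
proof -
  have "N \<notin> {1..N-1}" "N \<in> {1..N}" "1 \<in> {1..N-1}" using N by auto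
  thus ?thesis using unshift_mod_eq[OF \<theta> u] by (simp add: decode_index_def block_query_def)
qed

lemma block_answer_leaf:
  assumes "j \<in> {1..N-1}"
  shows "block_answer N j (block_query N \<theta> \<sigma> c u j) W = (if asked N \<theta> \<sigma> c j then Suc (to_nat (W j)) else 0)"
proof -
  have "j \<noteq> N" using assms by auto
  thus ?thesis using assms by (simp add: block_answer_def block_query_def)
qed

lemma nth_map_permutation:
  assumes "j \<in> {1..N-1}"
  shows "map \<sigma> [1..<N] ! (j - 1) = \<sigma> j"
proof -
  have "j - 1 < N - 1" "1 + (j - 1) = j" using assms by auto
  thus ?thesis by (simp only: nth_map_upt)
qed

lemma block_map_permutation: "block N (map \<sigma> [1..<N]) b = {j\<in>{1..N-1}. \<sigma> j div block_size N = b}"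
proof (rule set_eqI)
  fix j
  show "j \<in> block N (map \<sigma> [1..<N]) b \<longleftrightarrow> j \<in> {j\<in>{1..N-1}. \<sigma> j div block_size N = b}"
  proof (cases "j \<in> {1..N-1}")
    case True
    thus ?thesis using nth_map_permutation[OF True, of \<sigma>] unfolding block_def by simp
  qed (auto simp: block_def)
qed

lemma block_answer_centre:
  assumes "N \<ge> 2" "b < num_blocks N"
  shows "(from_nat (block_answer N N (block_query N \<theta> \<sigma> c u N) W) :: bool list list) ! b
       = xor_files (N - 1) W (block N (map \<sigma> [1..<N]) b)"
proof -
  have "N \<notin> {1..N-1}" using assms by auto
  thus ?thesis using assms by (simp add: block_answer_def block_query_def)
qed

lemma block_decode_correct:
  assumes N: "N \<ge> 3" and \<theta>: "\<theta> \<in> {1..N-1}" and \<sigma>: "\<sigma> permutes {1..N-1}" and u: "u < N - 1"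
    and W: "W \<in> set_pmf (files_pmf (N-1) (N-1))"
  shows "block_decode N (\<lambda>i. if i \<in> {1..N} then block_answer N i (block_query N \<theta> \<sigma> c u i) W else 0)
                        (\<lambda>i. if i \<in> {1..N} then block_query N \<theta> \<sigma> c u i else 0) = W \<theta>"
proof -
  define Q where "Q = (\<lambda>i. if i \<in> {1..N} then block_query N \<theta> \<sigma> c u i else 0)"
  define A where "A = (\<lambda>i. if i \<in> {1..N} then block_answer N i (block_query N \<theta> \<sigma> c u i) W else 0)"
  define B where "B = block N (map \<sigma> [1..<N]) (\<sigma> \<theta> div block_size N)"
  have leaf: "A j = (if asked N \<theta> \<sigma> c j then Suc (to_nat (W j)) else 0)" if "j \<in> {1..N-1}" for j
    using that block_answer_leaf[OF that] by (auto simp: A_def)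
  have index: "decode_index N Q = \<theta>" unfolding Q_def by (rule decode_index_block_query[OF N \<theta> u])
  show ?thesis
  proof (cases c)
    case True
    hence "A \<theta> = Suc (to_nat (W \<theta>))" using leaf[OF \<theta>] by (simp add: asked_def)
    thus ?thesis unfolding A_def[symmetric] Q_def[symmetric] block_decode_def by (simp add: Let_def index)
  next
    case False
    have B: "B = {j\<in>{1..N-1}. \<sigma> j div block_size N = \<sigma> \<theta> div block_size N}"
      unfolding B_def by (rule block_map_permutation)
    have "\<sigma> \<theta> \<in> {1..N-1}" using permutes_in_image[OF \<sigma>] \<theta> by simp
    hence "\<sigma> \<theta> div block_size N < num_blocks N" by (simp add: num_blocks_def div_le_mono le_imp_less_Suc)
    hence xor: "(from_nat (A N) :: bool list list) ! (\<sigma> \<theta> div block_size N) = xor_files (N - 1) W B"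
      using block_answer_centre[of N] N by (simp add: A_def B_def)
    have "(from_nat (A j - 1) :: bool list) = W j" if "j \<in> B - {\<theta>}" for j
      using that leaf[of j] by (auto simp: B asked_def)
    hence "{j\<in>B - {\<theta>}. (from_nat (A j - 1) :: bool list) ! k} = {j\<in>B - {\<theta>}. W j ! k}" for k
      by auto
    moreover have "A \<theta> = 0" using leaf[OF \<theta>] False by (simp add: asked_def)
    moreover have QN: "Q N = to_nat (map \<sigma> [1..<N], u)"
    proof -
      have "N \<notin> {1..N-1}" "N \<in> {1..N}" using N by auto
      thus ?thesis by (simp add: Q_def block_query_def)
    qed
    ultimately have "block_decode N A Q
        = map (\<lambda>k. xor_files (N - 1) W B ! k \<noteq> odd (card {j\<in>B - {\<theta>}. W j ! k})) [0..<N-1]"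
      unfolding block_decode_def Let_def index QN from_nat_to_nat fst_conv nth_map_permutation[OF \<theta>]
        B_def[symmetric] by (simp add: xor)
    also have "\<dots> = W \<theta>"
      by (rule xor_files_remove) (use \<theta> length_file[OF W \<theta>] in \<open>simp_all add: B\<close>)
    finally show ?thesis unfolding A_def Q_def .
  qed
qed

lemma set_pmf_of_set_permutes: "finite A \<Longrightarrow> set_pmf (pmf_of_set {\<sigma>. \<sigma> permutes A}) = {\<sigma>. \<sigma> permutes A}"
  by (rule set_pmf_of_set) (auto intro: finite_permutations permutes_id)

lemma set_pmf_query_seed:
  assumes "N \<ge> 2" "(\<sigma>, c, u) \<in> set_pmf (query_seed N)"
  shows "\<sigma> permutes {1..N-1}" "u < N - 1"
  using assms by (auto simp: query_seed_def set_pair_pmf set_pmf_of_set_permutes lessThan_empty_iff)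

lemma finite_set_pmf_query_seed: "N \<ge> 2 \<Longrightarrow> finite (set_pmf (query_seed N))"
  unfolding query_seed_def set_pair_pmf
  by (intro finite_cartesian_product) (auto simp: set_pmf_of_set_permutes finite_permutations lessThan_empty_iff
      intro: finite_subset[of _ UNIV])

lemma finite_set_pmf_block_query_pmf: "N \<ge> 2 \<Longrightarrow> finite (set_pmf (block_query_pmf N))"
  unfolding block_query_pmf_def using finite_set_pmf_query_seed by (auto simp: set_pair_pmf)

lemma map_fst_block_query_pmf: "map_pmf fst (block_query_pmf N) = pmf_of_set {1..N-1}"
  unfolding block_query_pmf_def by (simp add: pmf.map_comp o_def case_prod_beta map_fst_pair_pmf)

lemma map_block_query_pmf_index_query:
  "map_pmf (\<lambda>x. (fst x, snd x j)) (block_query_pmf N)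
     = map_pmf (\<lambda>(\<theta>, r). (\<theta>, (\<lambda>(\<sigma>, c, u). block_query N \<theta> \<sigma> c u j) r)) (pair_pmf (pmf_of_set {1..N-1}) (query_seed N))"
  unfolding block_query_pmf_def pmf.map_comp o_def by (intro map_pmf_cong refl) auto

lemma leaf_query_law:
  assumes N: "N \<ge> 3" and \<theta>: "\<theta> \<in> {1..N-1}" and j: "j \<in> {1..N-1}"
  shows "map_pmf (\<lambda>(\<sigma>, c, u). (asked N \<theta> \<sigma> c j, (\<theta> + u) mod (N - 1))) (query_seed N)
       = pair_pmf (bernoulli_pmf (same_block_prob (N - 1) (block_size N))) (pmf_of_set {..<N-1})"
proof -
  let ?S = "pmf_of_set {\<sigma>. \<sigma> permutes {1..N-1}}"
  let ?C = "bernoulli_pmf (same_block_prob (N - 1) (block_size N))" and ?U = "pmf_of_set {..<N-1}"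
  have shift: "map_pmf (\<lambda>u. (\<theta> + u) mod (N - 1)) ?U = ?U" using N by (intro map_pmf_add_mod_uniform) simp
  show ?thesis
  proof (cases "j = \<theta>")
    case True
    have "map_pmf (\<lambda>(\<sigma>, c, u). (asked N \<theta> \<sigma> c j, (\<theta> + u) mod (N - 1))) (query_seed N)
        = map_pmf (\<lambda>(c, u). (c, (\<theta> + u) mod (N - 1))) (map_pmf snd (query_seed N))"
      unfolding pmf.map_comp o_def using True by (intro map_pmf_cong refl) (auto simp: asked_def)
    also have "\<dots> = pair_pmf (map_pmf (\<lambda>c. c) ?C) (map_pmf (\<lambda>u. (\<theta> + u) mod (N - 1)) ?U)"
      unfolding query_seed_def map_snd_pair_pmf by (rule map_pair)
    finally show ?thesis using shift by simp
  next
    case False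
    have "map_pmf (\<lambda>(\<sigma>, c, u). (asked N \<theta> \<sigma> c j, (\<theta> + u) mod (N - 1))) (query_seed N)
        = map_pmf (\<lambda>(\<sigma>, cu). (\<sigma> j div block_size N = \<sigma> \<theta> div block_size N, (\<theta> + snd cu) mod (N - 1)))
            (pair_pmf ?S (pair_pmf ?C ?U))"
      using False unfolding query_seed_def by (intro map_pmf_cong refl) (auto simp: asked_def)
    also have "\<dots> = pair_pmf (map_pmf (\<lambda>\<sigma>. \<sigma> j div block_size N = \<sigma> \<theta> div block_size N) ?S)
                              (map_pmf (\<lambda>cu. (\<theta> + snd cu) mod (N - 1)) (pair_pmf ?C ?U))"
      by (rule map_pair)
    also have "map_pmf (\<lambda>cu. (\<theta> + snd cu) mod (N - 1)) (pair_pmf ?C ?U)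
        = map_pmf (\<lambda>u. (\<theta> + u) mod (N - 1)) (map_pmf snd (pair_pmf ?C ?U))"
      by (simp only: pmf.map_comp o_def)
    also have "\<dots> = ?U" by (simp only: map_snd_pair_pmf shift)
    also have "map_pmf (\<lambda>\<sigma>. \<sigma> j div block_size N = \<sigma> \<theta> div block_size N) ?S = ?C"
      by (rule same_block_law) (use N \<theta> j False in auto)
    finally show ?thesis .
  qed
qed

lemma block_query_law_leaf:
  assumes N: "N \<ge> 3" and j: "j \<in> {1..N-1}"
  shows "map_pmf (\<lambda>x. (fst x, snd x j)) (block_query_pmf N)
       = pair_pmf (pmf_of_set {1..N-1}) (map_pmf (\<lambda>(a, v). to_nat (a, if j = 1 then v else 0))
           (pair_pmf (bernoulli_pmf (same_block_prob (N - 1) (block_size N))) (pmf_of_set {..<N-1})))"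
  unfolding map_block_query_pmf_index_query
proof (rule map_pmf_pair_indep)
  fix \<theta> assume "\<theta> \<in> set_pmf (pmf_of_set {1..N-1})"
  hence \<theta>: "\<theta> \<in> {1..N-1}" using N by simp
  have "map_pmf (\<lambda>(\<sigma>, c, u). block_query N \<theta> \<sigma> c u j) (query_seed N)
      = map_pmf (\<lambda>(a, v). to_nat (a, if j = 1 then v else 0))
          (map_pmf (\<lambda>(\<sigma>, c, u). (asked N \<theta> \<sigma> c j, (\<theta> + u) mod (N - 1))) (query_seed N))"
    unfolding pmf.map_comp o_def using j by (intro map_pmf_cong refl) (auto simp: block_query_def)
  thus "map_pmf (\<lambda>(\<sigma>, c, u). block_query N \<theta> \<sigma> c u j) (query_seed N)
      = map_pmf (\<lambda>(a, v). to_nat (a, if j = 1 then v else 0))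
          (pair_pmf (bernoulli_pmf (same_block_prob (N - 1) (block_size N))) (pmf_of_set {..<N-1}))"
    by (simp only: leaf_query_law[OF N \<theta> j])
qed

lemma block_query_law_centre:
  assumes N: "N \<ge> 3"
  shows "map_pmf (\<lambda>x. (fst x, snd x N)) (block_query_pmf N)
       = pair_pmf (pmf_of_set {1..N-1}) (map_pmf (\<lambda>(\<sigma>, c, u). to_nat (map \<sigma> [1..<N], u)) (query_seed N))"
  unfolding map_block_query_pmf_index_query
  using N by (intro map_pmf_pair_indep map_pmf_cong refl) (auto simp: block_query_def)

lemma block_query_indep:
  assumes N: "N \<ge> 3" and j: "j \<in> {1..N}"
  shows "map_pmf (\<lambda>x. (fst x, snd x j)) (block_query_pmf N)
       = pair_pmf (pmf_of_set {1..N-1}) (map_pmf (\<lambda>x. snd x j) (block_query_pmf N))"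
proof -
  obtain \<nu> where indep: "map_pmf (\<lambda>x. (fst x, snd x j)) (block_query_pmf N) = pair_pmf (pmf_of_set {1..N-1}) \<nu>"
    using block_query_law_centre[OF N] block_query_law_leaf[OF N, of j] j by (cases "j = N") auto
  moreover have "\<nu> = map_pmf (\<lambda>x. snd x j) (block_query_pmf N)"
    using arg_cong[OF indep, of "map_pmf snd"] by (simp add: pmf.map_comp o_def map_snd_pair_pmf)
  ultimately show ?thesis by simp
qed

lemma xor_files_cong: "B \<subseteq> S \<Longrightarrow> \<forall>j\<in>S. W j = W' j \<Longrightarrow> xor_files L W B = xor_files L W' B"
  unfolding xor_files_def by (intro map_cong refl arg_cong[where f = "\<lambda>A. odd (card A)"]) auto

lemma block_answer_local:
  assumes "i \<in> {1..N}" "\<forall>j\<in>star_store N i. W j = W' j"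
  shows "block_answer N i q W = block_answer N i q W'"
proof (cases "i = N")
  case True
  hence "\<forall>j\<in>{1..N-1}. W j = W' j" using assms(2) by (simp add: star_store_def)
  hence "xor_files (N - 1) W (block N ps b) = xor_files (N - 1) W' (block N ps b)" for ps b
    by (intro xor_files_cong[of _ "{1..N-1}"]) (auto simp: block_def)
  thus ?thesis using True by (simp add: block_answer_def)
next
  case False
  thus ?thesis using assms(2) by (simp add: block_answer_def star_store_def)
qed

theorem block_scheme_is_star_pir_scheme:
  assumes N: "N \<ge> 3"
  shows "is_star_pir_scheme N (N-1) (block_query_pmf N) (block_answer N)"
proof -
  have fin: "finite (set_pmf (block_query_pmf N))" using N by (intro finite_set_pmf_block_query_pmf) simp
  have decode: "\<forall>(\<theta>, Q, W)\<in>set_pmf (pir_joint (block_query_pmf N) (N-1) (N-1)).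
      block_decode N (\<lambda>i. if i \<in> {1..N} then block_answer N i (Q i) W else 0)
                     (\<lambda>i. if i \<in> {1..N} then Q i else 0) = W \<theta>"
  proof (intro ballI, clarify)
    fix \<theta> Q W assume "(\<theta>, Q, W) \<in> set_pmf (pir_joint (block_query_pmf N) (N-1) (N-1))"
    hence "(\<theta>, Q) \<in> set_pmf (block_query_pmf N)" and W: "W \<in> set_pmf (files_pmf (N-1) (N-1))"
      by (auto simp: set_pmf_pir_joint)
    then obtain \<sigma> c u where \<theta>: "\<theta> \<in> {1..N-1}" and seed: "(\<sigma>, c, u) \<in> set_pmf (query_seed N)"
      and Q: "Q = block_query N \<theta> \<sigma> c u"
      using N by (auto simp: block_query_pmf_def set_pair_pmf)
    show "block_decode N (\<lambda>i. if i \<in> {1..N} then block_answer N i (Q i) W else 0)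
                         (\<lambda>i. if i \<in> {1..N} then Q i else 0) = W \<theta>"
      unfolding Q using N by (intro block_decode_correct \<theta> set_pmf_query_seed[OF _ seed] W) auto
  qed
  have privacy: "cond_ent (pir_joint (block_query_pmf N) (N-1) (N-1)) (\<lambda>(\<theta>, Q, W). \<theta>)
      (\<lambda>(\<theta>, Q, W). (Q i, \<lambda>j. if j \<in> star_store N i then W j else [])) = log 2 (real (N - 1))"
    if "i \<in> {1..N}" for i
  proof -
    have "N - 1 \<ge> 1" using N by simp
    from privacy_iff_query_indep[OF fin map_fst_block_query_pmf this,
        where L = "N - 1" and j = i and h = "restrict_files (star_store N i)"] block_query_indep[OF N that]
    show ?thesis unfolding restrict_files_def by blast
  qed
  show ?thesis
    unfolding is_star_pir_scheme_def Let_def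
    using fin map_fst_block_query_pmf block_answer_local decode privacy by blast
qed

lemma asked_bit_law:
  assumes N: "N \<ge> 3" and k: "k \<in> {1..N-1}"
  shows "map_pmf (\<lambda>x. fst (from_nat (snd x k) :: bool \<times> nat)) (block_query_pmf N)
       = bernoulli_pmf (same_block_prob (N - 1) (block_size N))"
proof -
  let ?C = "bernoulli_pmf (same_block_prob (N - 1) (block_size N))" and ?U = "pmf_of_set {..<N-1}"
  have "map_pmf (\<lambda>x. fst (from_nat (snd x k) :: bool \<times> nat)) (block_query_pmf N)
      = map_pmf (\<lambda>v. fst (from_nat v :: bool \<times> nat)) (map_pmf snd (map_pmf (\<lambda>x. (fst x, snd x k)) (block_query_pmf N)))"
    by (simp only: pmf.map_comp o_def snd_conv)
  also have "\<dots> = map_pmf (\<lambda>v. fst (from_nat v :: bool \<times> nat)) (map_pmf (\<lambda>(a, v). to_nat (a, if k = 1 then v else 0)) (pair_pmf ?C ?U))"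
    unfolding block_query_law_leaf[OF N k] map_snd_pair_pmf ..
  also have "\<dots> = map_pmf fst (pair_pmf ?C ?U)"
    by (simp add: pmf.map_comp o_def case_prod_beta)
  finally show ?thesis by (simp only: map_fst_pair_pmf)
qed

lemma ent_leaf_answer_le:
  assumes N: "N \<ge> 3" and k: "k \<in> {1..N-1}"
  shows "ent (map_pmf (\<lambda>(\<theta>, Q, W). block_answer N k (Q k) W) (pir_joint (block_query_pmf N) (N-1) (N-1)))
       \<le> 1 + real (N - 1) * same_block_prob (N - 1) (block_size N)"
proof -
  let ?P = "pir_joint (block_query_pmf N) (N-1) (N-1)"
  let ?p = "map_pmf (\<lambda>(\<theta>, Q, W). block_answer N k (Q k) W) ?P"
  let ?Y = "(\<lambda>W. Suc (to_nat W)) ` {xs :: bool list. length xs = N - 1}"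
  have kN: "k \<noteq> N" using k by auto
  have "set_pmf ?p \<subseteq> insert 0 ?Y"
    using length_file[OF _ k] kN by (auto simp: set_pmf_pir_joint block_answer_def)
  moreover have "card ?Y \<le> 2 ^ (N - 1)"
    using card_image_le[OF finite_bit_strings] by (simp add: card_bit_strings)
  ultimately have "ent ?p \<le> 1 + real (N - 1) * (1 - pmf ?p 0)"
    by (intro ent_le_one_plus_prob_nonzero) (auto simp: finite_bit_strings)
  moreover have "pmf ?p 0 = pmf (map_pmf (\<lambda>w. fst (from_nat (fst (snd w) k) :: bool \<times> nat)) ?P) False"
    using kN by (simp add: pmf_map vimage_def block_answer_def case_prod_beta)
  moreover have "map_pmf (\<lambda>w. fst (from_nat (fst (snd w) k) :: bool \<times> nat)) ?P
      = bernoulli_pmf (same_block_prob (N - 1) (block_size N))"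
    using map_pmf_pir_joint_queries[of "\<lambda>_ Q. fst (from_nat (Q k) :: bool \<times> nat)"] asked_bit_law[OF N k] by simp
  ultimately show ?thesis
    using same_block_prob_nonneg same_block_prob_le_1 by simp
qed

lemma ent_centre_answer_le:
  "ent (map_pmf (\<lambda>(\<theta>, Q, W). block_answer N N (Q N) W) (pir_joint (block_query_pmf N) (N-1) (N-1)))
     \<le> real (N - 1) * real (num_blocks N)"
proof -
  let ?A = "{xs :: bool list list. set xs \<subseteq> {xs. length xs = N - 1} \<and> length xs = num_blocks N}"
  have "set_pmf (map_pmf (\<lambda>(\<theta>, Q, W). block_answer N N (Q N) W) (pir_joint (block_query_pmf N) (N-1) (N-1)))
      \<subseteq> to_nat ` ?A"
  proof
    fix x assume "x \<in> set_pmf (map_pmf (\<lambda>(\<theta>, Q, W). block_answer N N (Q N) W) (pir_joint (block_query_pmf N) (N-1) (N-1)))"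
    then obtain Q W where x: "x = block_answer N N (Q N) W" by auto
    have "map (\<lambda>b. xor_files (N - 1) W (block N (fst (from_nat (Q N) :: nat list \<times> nat)) b)) [0..<num_blocks N] \<in> ?A"
      by (auto simp: xor_files_def)
    thus "x \<in> to_nat ` ?A" unfolding x block_answer_def by simp
  qed
  hence "ent (map_pmf (\<lambda>(\<theta>, Q, W). block_answer N N (Q N) W) (pir_joint (block_query_pmf N) (N-1) (N-1)))
      \<le> log 2 (card ?A)"
    by (intro ent_le_log_card_image) (auto simp: finite_lists_length_eq finite_bit_strings)
  also have "card ?A = 2 ^ ((N - 1) * num_blocks N)"
    by (simp add: card_lists_length_eq finite_bit_strings card_bit_strings power_mult)
  finally show ?thesis by (simp add: log_nat_power)
qed

lemma download_block_scheme_le: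
  assumes N: "N \<ge> 3"
  shows "download N (N-1) (block_query_pmf N) (block_answer N)
       \<le> real (N - 1) * (1 + real (N - 1) * same_block_prob (N - 1) (block_size N) + real (num_blocks N))"
proof -
  have "{1..N} = insert N {1..N-1}" using N by auto
  hence "download N (N-1) (block_query_pmf N) (block_answer N)
      = ent (map_pmf (\<lambda>(\<theta>, Q, W). block_answer N N (Q N) W) (pir_joint (block_query_pmf N) (N-1) (N-1)))
        + (\<Sum>k=1..N-1. ent (map_pmf (\<lambda>(\<theta>, Q, W). block_answer N k (Q k) W) (pir_joint (block_query_pmf N) (N-1) (N-1))))"
    unfolding download_def using N by simp
  also have "\<dots> \<le> real (N - 1) * real (num_blocks N) + (\<Sum>k=1..N-1. 1 + real (N - 1) * same_block_prob (N - 1) (block_size N))"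
    by (intro add_mono ent_centre_answer_le sum_mono ent_leaf_answer_le[OF N]) auto
  finally show ?thesis by (simp add: algebra_simps)
qed

lemma block_scheme_cost_le:
  assumes N: "N \<ge> 3"
  shows "1 + real (N - 1) * same_block_prob (N - 1) (block_size N) + real (num_blocks N) \<le> 5 * sqrt N"
proof -
  define K where "K = N - 1"
  define s where "s = sqrt (real K)"
  have K: "K \<ge> 2" and s: "s \<ge> 1" using N by (simp_all add: K_def s_def)
  have g: "real (block_size N) \<le> s + 1" "s < real (block_size N)"
    unfolding block_size_def K_def[symmetric] s_def[symmetric] using s by linarith+
  have "real K \<le> 2 * real (K - 1)" using K by simp
  hence "real K * same_block_prob K (block_size N) \<le> 2 * real (K - 1) * same_block_prob K (block_size N)"
    by (rule mult_right_mono) (rule same_block_prob_nonneg)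
  also have "\<dots> \<le> 2 * s"
    using same_block_prob_bound[OF K, of "block_size N"] g by (simp add: block_size_def mult.assoc)
  finally have leaves: "real K * same_block_prob K (block_size N) \<le> 2 * s" .
  have "real (K div block_size N) \<le> real K / real (block_size N)" by (rule of_nat_div_le_of_nat)
  also have "\<dots> \<le> real K / s" using g s by (intro divide_left_mono) auto
  also have "\<dots> = s" unfolding s_def using K by (simp add: real_div_sqrt)
  finally have blocks: "real (num_blocks N) \<le> s + 1" by (simp add: num_blocks_def K_def)
  have "s \<le> sqrt N" unfolding s_def K_def by simp
  thus ?thesis using leaves blocks s unfolding K_def by linarith
qed

lemma pir_rate_block_scheme_ge:
  assumes N: "N \<ge> 3"
  shows "1 / (5 * sqrt N) \<le> pir_rate N (N-1) (block_query_pmf N) (block_answer N)"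
proof -
  define T where "T = download N (N-1) (block_query_pmf N) (block_answer N)"
  define c where "c = 1 + real (N - 1) * same_block_prob (N - 1) (block_size N) + real (num_blocks N)"
  have K: "real (N - 1) > 0" using N by simp
  have "real (N - 1) * real 1 * real (N - 1) \<le> (real (N - 1) + real 1 * (real 1 + 1) / 2) * T"
    unfolding T_def by (rule download_lower_bound[OF block_scheme_is_star_pir_scheme[OF N]]) (use N in auto)
  moreover have "0 < real (N - 1) * real 1 * real (N - 1)" using K by simp
  ultimately have "0 < (real (N - 1) + real 1 * (real 1 + 1) / 2) * T" by linarith
  hence T: "0 < T" using K by (simp add: zero_less_mult_iff)
  have c: "0 < c" "c \<le> 5 * sqrt N"
    using block_scheme_cost_le[OF N] same_block_prob_nonneg by (simp_all add: c_def add_pos_nonneg)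
  have "1 / (5 * sqrt N) \<le> 1 / c" using c N by (intro divide_left_mono) auto
  also have "\<dots> = real (N - 1) / (real (N - 1) * c)" using K by simp
  also have "\<dots> \<le> real (N - 1) / T"
    using download_block_scheme_le[OF N] T c K by (intro divide_left_mono) (simp_all add: T_def c_def)
  finally show ?thesis by (simp add: pir_rate_eq T_def)
qed

lemma pir_capacity_star_bounds:
  assumes N: "N \<ge> 5"
  shows "1 / (5 * sqrt N) \<le> pir_capacity_star N" and "pir_capacity_star N \<le> 5 / sqrt N"
proof -
  let ?R = "{pir_rate N L \<mu> ans | L \<mu> ans. L \<ge> 1 \<and> is_star_pir_scheme N L \<mu> ans}"
  have block: "pir_rate N (N-1) (block_query_pmf N) (block_answer N) \<in> ?R"
    using block_scheme_is_star_pir_scheme N by fastforce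
  have upper: "r \<le> 5 / sqrt N" if "r \<in> ?R" for r
    using that pir_rate_upper N by blast
  show "pir_capacity_star N \<le> 5 / sqrt N"
    unfolding pir_capacity_star_def using block upper by (intro cSup_least) auto
  have "1 / (5 * sqrt N) \<le> pir_rate N (N-1) (block_query_pmf N) (block_answer N)"
    using N by (intro pir_rate_block_scheme_ge) simp
  also have "\<dots> \<le> pir_capacity_star N"
    unfolding pir_capacity_star_def using block upper by (intro cSup_upper bdd_aboveI) auto
  finally show "1 / (5 * sqrt N) \<le> pir_capacity_star N" .
qed

theorem theorem7:
  shows "pir_capacity_star \<in> \<Theta>(\<lambda>N. 1 / sqrt (real N))"
proof -
  have "\<forall>\<^sub>F N in at_top. 1 / 5 * norm (1 / sqrt (real N)) \<le> norm (pir_capacity_star N)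
                        \<and> norm (pir_capacity_star N) \<le> 5 * norm (1 / sqrt (real N))"
  proof (rule eventually_at_top_linorderI)
    fix N :: nat assume "N \<ge> 5"
    note bounds = pir_capacity_star_bounds[OF this]
    have "0 < 1 / (5 * sqrt N)" using \<open>N \<ge> 5\<close> by simp
    thus "1 / 5 * norm (1 / sqrt (real N)) \<le> norm (pir_capacity_star N)
          \<and> norm (pir_capacity_star N) \<le> 5 * norm (1 / sqrt (real N))"
      using bounds by simp
  qed
  thus ?thesis
    by (intro bigthetaI bigoI[where c = 5] landau_omega.bigI[where c = "1 / 5"]) (auto elim: eventually_mono)
qed

end
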